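(* Assume the setting described in the context. Let $u_0\in\mathsf H_1$ and $0<T<T^*(u_0)$. Then there exists $n_0\in\mathbb N$ such that for all $n\ge n_0$ the approximate solution $u_n=\Phi_n(\cdot)u_0$ is defined on $[0,T]$ (i.e. $T<T_n^*(u_0)$), and $$\lim_{n\to\infty}\max_{t\in[0,T]}\|u(t)-u_n(t)\|_{\mathsf H_1}=0,$$ where $u(t)=\Phi(t)u_0$ is the exact solution.
   Context: $\mathsf H_1$ is a complex Hilbert space, $A$ a self-adjoint operator in $\mathsf H_1$ and $\Phi^A(t)=e^{-itA}$ the unitary group it generates. $B:\mathsf H_1\to\mathsf H_1$ is locally Lipschitz with $B(0)=0$. For $u_0\in\mathsf H_1$, $u(t)=\Phi(t)u_0$ denotes the unique maximal solution $u\in C([0,T^*(u_0)),\mathsf H_1)$ of $u(t)=\Phi^A(t)u_0-i\int_0^t\Phi^A(t-t')B(u(t'))\,dt'$, with maximal existence time $T^*(u_0)\in(0,\infty]$ (if finite, $\|u(t)\|\to\infty$ as $t\uparrow T^*$). Weak convergence: $\alpha_n\rightharpoonup\alpha$ in $L^1_{\mathrm{loc}}(\mathbb R)$ means $\int_I\alpha_n\theta\to\int_I\alpha\theta$ for every compact interval $I$ and every $\theta\in C(I)$. Let $(\alpha_n),(\beta_n)$ be real-valued functions in $L^1_{\mathrm{loc}}(\mathbb R)$ with $\alpha_n\rightharpoonup1$, $\beta_n\rightharpoonup1$, and $|\alpha_n|\le\bar\alpha$, $|\beta_n|\le\bar\beta$ a.e. for some $\bar\alpha,\bar\beta\in L^1_{\mathrm{loc}}(\mathbb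 R)$. Set $\Phi^{A,n}(t_1,t_0)=\Phi^A\big(\int_{t_0}^{t_1}\alpha_n(s)\,ds\big)$. The approximate flow is $\Phi_n(t)u_0=u_n(t)$, where $u_n\in C([0,T_n^*(u_0)),\mathsf H_1)$ is the maximal solution of $u_n(t)=\Phi^{A,n}(t,0)u_0-i\int_0^t\beta_n(t')\Phi^{A,n}(t,t')B(u_n(t'))\,dt'$ (the mild form of $iw_t=(\alpha_nA+\beta_nB)w$, $w(0)=u_0$), with maximal existence time $T_n^*(u_0)$. *)

theory Defs
  imports "HOL-Analysis.Analysis"
begin

text \<open>The complex Hilbert space H1 is represented by its realification: a real Hilbert
space 'a (real_inner + complete_space) with a complex structure J (multiplication by i).\<close>

definition complex_structure :: "('a::real_inner \<Rightarrow> 'a) \<Rightarrow> bool" where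
  "complex_structure J \<longleftrightarrow> linear J \<and> (\<forall>x. J (J x) = - x)
     \<and> (\<forall>x y. inner (J x) (J y) = inner x y)"

text \<open>Self-adjoint (possibly unbounded) operator A with domain D, complex linear w.r.t. J.
For J-linear A and J-invariant D, the complex adjointness relation is equivalent to the real one.\<close>

definition self_adjoint_op :: "('a::real_inner \<Rightarrow> 'a) \<Rightarrow> 'a set \<Rightarrow> ('a \<Rightarrow> 'a) \<Rightarrow> bool" where
  "self_adjoint_op J D A \<longleftrightarrow>
     subspace D \<and> (\<forall>x\<in>D. J x \<in> D) \<and> closure D = UNIV
     \<and> (\<forall>x\<in>D. \<forall>y\<in>D. \<forall>a b. A (a *\<^sub>R x + b *\<^sub>R y) = a *\<^sub>R A x + b *\<^sub>R A y)
     \<and> (\<forall>x\<in>D. A (J x) = J (A x))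
     \<and> (\<forall>y z. (\<forall>x\<in>D. inner (A x) y = inner x z) \<longleftrightarrow> (y \<in> D \<and> z = A y))"

text \<open>U t = e^{-itA}: a strongly continuous group of complex-linear unitaries whose
generator is -iA (domain D).\<close>

definition unitary_group_generated :: "('a::real_inner \<Rightarrow> 'a) \<Rightarrow> 'a set \<Rightarrow> ('a \<Rightarrow> 'a) \<Rightarrow> (real \<Rightarrow> 'a \<Rightarrow> 'a) \<Rightarrow> bool" where
  "unitary_group_generated J D A U \<longleftrightarrow>
     U 0 = id \<and> (\<forall>s t. U (s + t) = U s \<circ> U t)
     \<and> (\<forall>t. linear (U t) \<and> (\<forall>x. U t (J x) = J (U t x)) \<and> (\<forall>x. norm (U t x) = norm x))
     \<and> (\<forall>x. continuous_on UNIV (\<lambda>t. U t x))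
     \<and> (\<forall>x. x \<in> D \<longleftrightarrow> (\<exists>v. ((\<lambda>t. U t x) has_vector_derivative v) (at 0)))
     \<and> (\<forall>x\<in>D. ((\<lambda>t. U t x) has_vector_derivative (- J (A x))) (at 0))"

definition loc_lipschitz :: "('a::real_normed_vector \<Rightarrow> 'a) \<Rightarrow> bool" where
  "loc_lipschitz B \<longleftrightarrow> (\<forall>R. \<exists>L. L-lipschitz_on (cball 0 R) B)"

definition loc_integrable :: "(real \<Rightarrow> real) \<Rightarrow> bool" where
  "loc_integrable f \<longleftrightarrow> (\<forall>a b. set_integrable lborel {a..b} f)"

definition weak_conv_one :: "(nat \<Rightarrow> real \<Rightarrow> real) \<Rightarrow> bool" where
  "weak_conv_one \<alpha> \<longleftrightarrow> (\<forall>a b \<theta>. continuous_on {a..b} \<theta> \<longrightarrow>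
      (\<lambda>n. LINT s:{a..b}|lborel. \<alpha> n s * \<theta> s) \<longlonglongrightarrow> (LINT s:{a..b}|lborel. \<theta> s))"

definition mild_sol :: "('a::{real_normed_vector} \<Rightarrow> 'a) \<Rightarrow> (real \<Rightarrow> 'a \<Rightarrow> 'a) \<Rightarrow> ('a \<Rightarrow> 'a)
    \<Rightarrow> 'a \<Rightarrow> real \<Rightarrow> (real \<Rightarrow> 'a) \<Rightarrow> bool" where
  "mild_sol J U B u0 T w \<longleftrightarrow> continuous_on {0..T} w \<and>
     (\<forall>t\<in>{0..T}. (\<lambda>s. U (t - s) (B (w s))) integrable_on {0..t} \<and>
        w t = U t u0 - J (integral {0..t} (\<lambda>s. U (t - s) (B (w s)))))"

text \<open>Phi^{A,n}(t1,t0) = U(int_{t0}^{t1} alpha_n) (used only for t0 \<le> t1).\<close>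

definition Phi_n :: "(real \<Rightarrow> 'a \<Rightarrow> 'a) \<Rightarrow> (real \<Rightarrow> real) \<Rightarrow> real \<Rightarrow> real \<Rightarrow> 'a \<Rightarrow> 'a" where
  "Phi_n U \<alpha> t1 t0 = U (LINT s:{t0..t1}|lborel. \<alpha> s)"

definition mild_sol_n :: "('a::{real_normed_vector} \<Rightarrow> 'a) \<Rightarrow> (real \<Rightarrow> 'a \<Rightarrow> 'a) \<Rightarrow> (real \<Rightarrow> real)
    \<Rightarrow> (real \<Rightarrow> real) \<Rightarrow> ('a \<Rightarrow> 'a) \<Rightarrow> 'a \<Rightarrow> real \<Rightarrow> (real \<Rightarrow> 'a) \<Rightarrow> bool" where
  "mild_sol_n J U \<alpha> \<beta> B u0 T w \<longleftrightarrow> continuous_on {0..T} w \<and>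
     (\<forall>t\<in>{0..T}. (\<lambda>s. \<beta> s *\<^sub>R Phi_n U \<alpha> t s (B (w s))) integrable_on {0..t} \<and>
        w t = Phi_n U \<alpha> t 0 u0 - J (integral {0..t} (\<lambda>s. \<beta> s *\<^sub>R Phi_n U \<alpha> t s (B (w s)))))"

end

theory Submission
  imports Defs
begin

hide_const (open) Polynomial.content

text \<open>
  In the interaction picture \<open>U(-s)\<close> the exact and approximate Duhamel formulas differ by the phase
  errors \<open>U(\<integral>\<^sub>0\<^sup>t\<alpha>\<^sub>n - t)\<close>, which vanish uniformly since \<open>\<integral>\<^sub>0\<^sup>t\<alpha>\<^sub>n \<rightarrow> t\<close> uniformly on \<open>[0,T]\<close>, by the
  weak-convergence error \<open>\<integral>\<^sub>0\<^sup>t(1-\<beta>\<^sub>n)U(-s)B(u(s))ds\<close>, which vanishes uniformly by an equicontinuity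
  argument (the \<open>L\<^sup>1\<close> majorant of \<open>\<beta>\<^sub>n\<close>), and by a Lipschitz term in \<open>u - u\<^sub>n\<close>. A Gronwall
  inequality with the exponential weight \<open>e\<^sup>l\<^sup>t\<close>, which works for the merely integrable kernel
  \<open>L|\<beta>\<^sub>n|\<close> uniformly in \<open>n\<close>, then gives uniform convergence. To have \<open>u\<^sub>n\<close> on all of \<open>[0,T]\<close>, \<open>B\<close> is
  first truncated outside a ball containing \<open>u([0,T])\<close>; the truncated problems are solved by Picard
  iteration in the same weighted norm, and their solutions eventually stay inside the ball.

  The Hilbert space is only of sort \<open>{real_inner, complete_space}\<close>, not \<open>banach\<close>, so several
  Henstock--Kurzweil facts that the library states for \<open>banach\<close> codomains are re-proved below.
\<close>

lemma partition_of_unity_approximation: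
  fixes g :: "'a::metric_space \<Rightarrow> 'b::real_normed_vector"
  assumes S: "compact S" and g: "continuous_on S g" and e: "e > 0"
  obtains I :: "'a set set" and c :: "'a set \<Rightarrow> 'a" and \<psi> :: "'a set \<Rightarrow> 'a \<Rightarrow> real"
  where "finite I" "\<And>i. i \<in> I \<Longrightarrow> c i \<in> S" "\<And>i. i \<in> I \<Longrightarrow> continuous_on S (\<psi> i)"
    "\<And>x. x \<in> S \<Longrightarrow> norm (g x - (\<Sum>i\<in>I. \<psi> i x *\<^sub>R g (c i))) \<le> e"
proof -
  obtain d where d: "d > 0" and dg: "\<And>x y. x \<in> S \<Longrightarrow> y \<in> S \<Longrightarrow> dist y x < d \<Longrightarrow> dist (g y) (g x) < e"
    using compact_uniformly_continuous[OF g S] e unfolding uniformly_continuous_on_def by metis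
  obtain C where C: "C \<subseteq> S" "finite C" and cover: "S \<subseteq> (\<Union>c\<in>C. ball c d)"
  proof (rule compactE_image[OF S, of S "\<lambda>c. ball c d"])
    show "S \<subseteq> (\<Union>c\<in>S. ball c d)" using d by auto
  qed auto
  define I where "I = (\<lambda>c. ball c d) ` C"
  define c where "c W = (SOME c. c \<in> C \<and> W = ball c d)" for W
  have c: "c W \<in> C" "W = ball (c W) d" if "W \<in> I" for W
  proof -
    have "\<exists>c'. c' \<in> C \<and> W = ball c' d" using that by (auto simp: I_def)
    then show "c W \<in> C" "W = ball (c W) d" unfolding c_def by (metis (mono_tags, lifting) someI_ex)+
  qed
  have fin: "finite I" using C by (simp add: I_def)
  obtain F :: "'a set \<Rightarrow> 'a \<Rightarrow> real" where Fc: "\<And>W. W \<in> I \<Longrightarrow> continuous_on S (F W) \<and> (\<forall>x\<in>S. 0 \<le> F W x)"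
    and F0: "\<And>x W. W \<in> I \<Longrightarrow> x \<in> S \<Longrightarrow> x \<notin> W \<Longrightarrow> F W x = 0"
    and F1: "\<And>x. x \<in> S \<Longrightarrow> supp_sum (\<lambda>W. F W x) I = 1"
  proof (rule subordinate_partition_of_unity[of S I])
    show "S \<subseteq> \<Union>I" "\<And>W. W \<in> I \<Longrightarrow> open W" using cover by (auto simp: I_def)
    show "\<exists>V. open V \<and> x \<in> V \<and> finite {W \<in> I. W \<inter> V \<noteq> {}}" for x
      using fin by (intro exI[of _ UNIV]) auto
  qed blast
  have sum1: "(\<Sum>W\<in>I. F W x) = 1" if "x \<in> S" for x
  proof -
    have "supp_sum (\<lambda>W. F W x) I = (\<Sum>W\<in>I. F W x)"
      unfolding supp_sum_def by (rule sum.mono_neutral_left) (auto simp: fin support_on_def)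
    then show ?thesis using F1[OF that] by simp
  qed
  show ?thesis
  proof (rule that[OF fin _ _])
    show "c W \<in> S" "continuous_on S (F W)" if "W \<in> I" for W using c[OF that] C Fc[OF that] by auto
    fix x assume x: "x \<in> S"
    have "g x - (\<Sum>W\<in>I. F W x *\<^sub>R g (c W)) = (\<Sum>W\<in>I. F W x *\<^sub>R (g x - g (c W)))"
      by (simp add: scaleR_diff_right sum_subtractf sum1[OF x] scaleR_sum_left[symmetric])
    also have "norm \<dots> \<le> (\<Sum>W\<in>I. F W x * e)"
    proof (rule order_trans[OF norm_sum sum_mono])
      fix W assume W: "W \<in> I"
      have "norm (g x - g (c W)) \<le> e" if "x \<in> W"
      proof -
        have "dist x (c W) < d" using c(2)[OF W] that by (metis mem_ball dist_commute)
        then show ?thesis using dg[of "c W" x] c(1)[OF W] C x by (simp add: dist_norm subset_iff)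
      qed
      moreover have "0 \<le> F W x" using Fc[OF W] x by blast
      ultimately show "norm (F W x *\<^sub>R (g x - g (c W))) \<le> F W x * e"
        using F0[OF W x] by (cases "x \<in> W") (simp_all add: mult_left_mono)
    qed
    also have "\<dots> = e" by (simp add: sum_distrib_right[symmetric] sum1[OF x])
    finally show "norm (g x - (\<Sum>W\<in>I. F W x *\<^sub>R g (c W))) \<le> e" .
  qed
qed
lemma norm_rsum_diff_le_weighted:
  fixes f f' :: "real \<Rightarrow> 'a::real_normed_vector"
  assumes p: "p tagged_division_of {a..b}"
    and le: "\<And>x. x \<in> {a..b} \<Longrightarrow> norm (f x - f' x) \<le> e * h x"
  shows "norm ((\<Sum>(x,k)\<in>p. content k *\<^sub>R f x) - (\<Sum>(x,k)\<in>p. content k *\<^sub>R f' x))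
           \<le> e * (\<Sum>(x,k)\<in>p. content k *\<^sub>R h x)"
proof -
  have "norm ((\<Sum>(x,k)\<in>p. content k *\<^sub>R f x) - (\<Sum>(x,k)\<in>p. content k *\<^sub>R f' x))
      = norm (\<Sum>(x,k)\<in>p. content k *\<^sub>R (f x - f' x))"
    by (simp add: split_def scaleR_diff_right sum_subtractf)
  also have "\<dots> \<le> (\<Sum>(x,k)\<in>p. norm (content k *\<^sub>R (f x - f' x)))"
    by (rule norm_sum[THEN order_trans]) (simp add: split_def)
  also have "\<dots> \<le> (\<Sum>(x,k)\<in>p. e * (content k *\<^sub>R h x))"
  proof (rule sum_mono, clarify)
    fix x k assume "(x,k) \<in> p"
    then have "x \<in> {a..b}" using p by (meson subsetD tagged_division_ofD(2) tagged_division_ofD(3))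
    then show "norm (content k *\<^sub>R (f x - f' x)) \<le> e * (content k *\<^sub>R h x)"
      using mult_left_mono[OF le, of x "content k"] by (simp add: mult.left_commute)
  qed
  also have "\<dots> = e * (\<Sum>(x,k)\<in>p. content k *\<^sub>R h x)"
    by (simp add: sum_distrib_left split_def)
  finally show ?thesis .
qed

lemma integrable_weighted_approximation:
  fixes f :: "real \<Rightarrow> 'a::{real_normed_vector,complete_space}"
  assumes h: "h integrable_on {a..b}"
    and approx: "\<And>e. e > 0 \<Longrightarrow> \<exists>f'. f' integrable_on {a..b} \<and> (\<forall>x\<in>{a..b}. norm (f x - f' x) \<le> e * h x)"
  shows "f integrable_on {a..b}"
proof -
  let ?rsum = "\<lambda>f \<D>. \<Sum>(x,K)\<in>\<D>. content K *\<^sub>R f x"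
  have "\<exists>\<gamma>. gauge \<gamma> \<and> (\<forall>\<D>1 \<D>2. \<D>1 tagged_division_of cbox a b \<and> \<gamma> fine \<D>1 \<and>
          \<D>2 tagged_division_of cbox a b \<and> \<gamma> fine \<D>2 \<longrightarrow> norm (?rsum f \<D>1 - ?rsum f \<D>2) < e)"
    if e: "e > 0" for e
  proof -
    define H where "H = \<bar>integral {a..b} h\<bar> + 1"
    have H: "H > 0" by (simp add: H_def add_pos_nonneg)
    define e' where "e' = e / (4 * H)"
    have e': "e' > 0" using e H by (simp add: e'_def)
    obtain f' where f': "f' integrable_on cbox a b" and ff': "\<forall>x\<in>{a..b}. norm (f x - f' x) \<le> e' * h x"
      using approx[OF e'] by auto
    obtain \<gamma>1 where g1: "gauge \<gamma>1" and c1: "\<And>\<D>1 \<D>2. \<D>1 tagged_division_of cbox a b \<Longrightarrow> \<gamma>1 fine \<D>1 \<Longrightarrow>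
        \<D>2 tagged_division_of cbox a b \<Longrightarrow> \<gamma>1 fine \<D>2 \<Longrightarrow> norm (?rsum f' \<D>1 - ?rsum f' \<D>2) < e/2"
      using f' e unfolding integrable_Cauchy by (meson half_gt_zero)
    obtain \<gamma>2 where g2: "gauge \<gamma>2" and c2: "\<And>\<D>. \<D> tagged_division_of {a..b} \<Longrightarrow> \<gamma>2 fine \<D> \<Longrightarrow>
        norm (?rsum h \<D> - integral {a..b} h) < 1"
      using integrable_integral[OF h] unfolding has_integral_real by (auto dest!: spec[of _ 1])
    have close: "norm (?rsum f \<D> - ?rsum f' \<D>) \<le> e' * H"
      if d: "\<D> tagged_division_of {a..b}" "\<gamma>2 fine \<D>" for \<D>
    proof -
      have "norm (?rsum f \<D> - ?rsum f' \<D>) \<le> e' * ?rsum h \<D>"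
        by (rule norm_rsum_diff_le_weighted[OF d(1)]) (use ff' in auto)
      also have "\<dots> \<le> e' * H" using c2[OF d] e' by (intro mult_left_mono) (auto simp: H_def)
      finally show ?thesis .
    qed
    show ?thesis
    proof (intro exI conjI allI impI)
      show "gauge (\<lambda>x. \<gamma>1 x \<inter> \<gamma>2 x)" using g1 g2 by (rule gauge_Int)
      fix \<D>1 \<D>2
      assume "\<D>1 tagged_division_of cbox a b \<and> (\<lambda>x. \<gamma>1 x \<inter> \<gamma>2 x) fine \<D>1 \<and>
           \<D>2 tagged_division_of cbox a b \<and> (\<lambda>x. \<gamma>1 x \<inter> \<gamma>2 x) fine \<D>2"
      then have d: "\<D>1 tagged_division_of {a..b}" "\<D>2 tagged_division_of {a..b}"
        and f: "\<gamma>1 fine \<D>1" "\<gamma>2 fine \<D>1" "\<gamma>1 fine \<D>2" "\<gamma>2 fine \<D>2"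
        by (auto simp: fine_Int)
      have "norm (?rsum f \<D>1 - ?rsum f \<D>2) \<le> norm (?rsum f \<D>1 - ?rsum f' \<D>1)
          + norm (?rsum f' \<D>1 - ?rsum f' \<D>2) + norm (?rsum f \<D>2 - ?rsum f' \<D>2)"
        by (metis (no_types, lifting) add.commute norm_diff_triangle_le norm_minus_commute order_refl)
      also have "\<dots> < e' * H + e/2 + e' * H"
        using close[OF d(1) f(2)] c1[OF d(1)[unfolded box_real[symmetric]] f(1)
            d(2)[unfolded box_real[symmetric]] f(3)] close[OF d(2) f(4)] by linarith
      also have "\<dots> \<le> e" using H by (simp add: e'_def)
      finally show "norm (?rsum f \<D>1 - ?rsum f \<D>2) < e" .
    qed
  qed
  then show ?thesis using integrable_Cauchy[of f a b] by (simp add: box_real)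
qed

lemma absolutely_integrable_times_continuous:
  fixes \<beta> \<theta> :: "real \<Rightarrow> real"
  assumes \<beta>: "\<beta> absolutely_integrable_on {a..b}" and \<theta>: "continuous_on {a..b} \<theta>"
  shows "(\<lambda>s. \<beta> s * \<theta> s) absolutely_integrable_on {a..b}"
proof -
  have "(\<lambda>s. \<theta> s * \<beta> s) absolutely_integrable_on {a..b}"
  proof (rule absolutely_integrable_bounded_measurable_product_real[OF _ _ _ \<beta>])
    show "\<theta> \<in> borel_measurable (lebesgue_on {a..b})"
      by (rule continuous_imp_measurable_on_sets_lebesgue[OF \<theta>]) simp
    show "bounded (\<theta> ` {a..b})" by (rule compact_imp_bounded[OF compact_continuous_image[OF \<theta>]]) simp
  qed simp
  then show ?thesis by (simp add: mult.commute)
qed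

lemma integrable_scaleR_continuous:
  fixes \<beta> :: "real \<Rightarrow> real" and g :: "real \<Rightarrow> 'a::{real_normed_vector,complete_space}"
  assumes \<beta>: "\<beta> absolutely_integrable_on {a..b}" and g: "continuous_on {a..b} g"
  shows "(\<lambda>s. \<beta> s *\<^sub>R g s) integrable_on {a..b}"
proof (rule integrable_weighted_approximation)
  show "(\<lambda>s. \<bar>\<beta> s\<bar> + 1) integrable_on {a..b}"
    using \<beta> by (intro integrable_add) (auto simp: absolutely_integrable_on_def)
  fix e :: real assume e: "e > 0"
  obtain I :: "real set set" and c \<psi> where I: "finite I" and c: "\<And>i. i \<in> I \<Longrightarrow> c i \<in> {a..b}"
    and \<psi>: "\<And>i. i \<in> I \<Longrightarrow> continuous_on {a..b} (\<psi> i)"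
    and approx: "\<And>x. x \<in> {a..b} \<Longrightarrow> norm (g x - (\<Sum>i\<in>I. \<psi> i x *\<^sub>R g (c i))) \<le> e"
    by (rule partition_of_unity_approximation[OF compact_Icc g e], rule that)
  show "\<exists>f'. f' integrable_on {a..b} \<and> (\<forall>x\<in>{a..b}. norm (\<beta> x *\<^sub>R g x - f' x) \<le> e * (\<bar>\<beta> x\<bar> + 1))"
  proof (intro exI conjI ballI)
    show "(\<lambda>x. \<Sum>i\<in>I. (\<beta> x * \<psi> i x) *\<^sub>R g (c i)) integrable_on {a..b}"
    proof (rule integrable_sum[OF I])
      fix i assume "i \<in> I"
      then have "(\<lambda>x. \<beta> x * \<psi> i x) integrable_on {a..b}"
        using absolutely_integrable_times_continuous[OF \<beta> \<psi>] set_lebesgue_integral_eq_integral(1) by blast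
      then show "(\<lambda>x. (\<beta> x * \<psi> i x) *\<^sub>R g (c i)) integrable_on {a..b}"
        by (rule integrable_on_scaleR_left)
    qed
    fix x assume x: "x \<in> {a..b}"
    have "\<beta> x *\<^sub>R g x - (\<Sum>i\<in>I. (\<beta> x * \<psi> i x) *\<^sub>R g (c i))
        = \<beta> x *\<^sub>R (g x - (\<Sum>i\<in>I. \<psi> i x *\<^sub>R g (c i)))"
      by (simp add: scaleR_diff_right scaleR_sum_right)
    then have "norm (\<beta> x *\<^sub>R g x - (\<Sum>i\<in>I. (\<beta> x * \<psi> i x) *\<^sub>R g (c i)))
        = \<bar>\<beta> x\<bar> * norm (g x - (\<Sum>i\<in>I. \<psi> i x *\<^sub>R g (c i)))"
      by simp
    also have "\<dots> \<le> \<bar>\<beta> x\<bar> * e" by (rule mult_left_mono[OF approx[OF x]]) simp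
    also have "\<dots> \<le> e * (\<bar>\<beta> x\<bar> + 1)" using e by (simp add: algebra_simps)
    finally show "norm (\<beta> x *\<^sub>R g x - (\<Sum>i\<in>I. (\<beta> x * \<psi> i x) *\<^sub>R g (c i))) \<le> e * (\<bar>\<beta> x\<bar> + 1)" .
  qed
qed

lemma integral_combine_inner:
  fixes f :: "real \<Rightarrow> 'a::real_inner"
  assumes "a \<le> c" "c \<le> b"
    and "f integrable_on {a..c}" "f integrable_on {c..b}" "f integrable_on {a..b}"
  shows "integral {a..c} f + integral {c..b} f = integral {a..b} f"
proof (rule vector_eq_ldot[THEN iffD1, rule_format])
  fix y
  have lin: "integral S (\<lambda>x. y \<bullet> f x) = y \<bullet> integral S f" "(\<lambda>x. y \<bullet> f x) integrable_on S"
    if "f integrable_on S" for S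
    using integral_linear[OF that bounded_linear_inner_right] integrable_linear[OF that bounded_linear_inner_right]
    by (simp_all add: o_def)
  have "integral {a..c} (\<lambda>x. y \<bullet> f x) + integral {c..b} (\<lambda>x. y \<bullet> f x) = integral {a..b} (\<lambda>x. y \<bullet> f x)"
    using assms lin by (intro Henstock_Kurzweil_Integration.integral_combine) auto
  then show "y \<bullet> (integral {a..c} f + integral {c..b} f) = y \<bullet> integral {a..b} f"
    using assms lin by (simp add: inner_add_right)
qed

lemma integral_norm_bound_integral_inner:
  fixes f :: "real \<Rightarrow> 'a::real_inner"
  assumes f: "f integrable_on S" and g: "g integrable_on S" and le: "\<And>x. x \<in> S \<Longrightarrow> norm (f x) \<le> g x"
  shows "norm (integral S f) \<le> integral S g"
proof -
  let ?I = "integral S f"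
  have "(norm ?I)\<^sup>2 = integral S (\<lambda>x. ?I \<bullet> f x)"
    using integral_linear[OF f bounded_linear_inner_right, of ?I] by (simp add: o_def power2_norm_eq_inner)
  also have "\<dots> \<le> integral S (\<lambda>x. norm ?I * g x)"
  proof (rule integral_le)
    show "(\<lambda>x. ?I \<bullet> f x) integrable_on S"
      using integrable_linear[OF f bounded_linear_inner_right, of ?I] by (simp add: o_def)
    show "(\<lambda>x. norm ?I * g x) integrable_on S" using integrable_cmul[OF g, of "norm ?I"] by simp
    show "?I \<bullet> f x \<le> norm ?I * g x" if "x \<in> S" for x
      using norm_cauchy_schwarz[of ?I "f x"] mult_left_mono[OF le[OF that] norm_ge_zero[of ?I]] by linarith
  qed
  also have "\<dots> = norm ?I * integral S g" by simp
  finally have *: "(norm ?I)\<^sup>2 \<le> norm ?I * integral S g" .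
  have "0 \<le> integral S g"
    using le by (intro integral_nonneg[OF g]) (auto intro: order_trans[OF norm_ge_zero])
  then show ?thesis using * by (cases "norm ?I = 0") (auto simp: power2_eq_square)
qed

lemma norm_integral_scaleR_le:
  fixes \<beta> :: "real \<Rightarrow> real" and g :: "real \<Rightarrow> 'a::{real_inner,complete_space}"
  assumes \<beta>: "\<beta> absolutely_integrable_on {a..b}" and g: "continuous_on {a..b} g"
  shows "norm (integral {a..b} (\<lambda>s. \<beta> s *\<^sub>R g s)) \<le> integral {a..b} (\<lambda>s. \<bar>\<beta> s\<bar> * norm (g s))"
proof (rule integral_norm_bound_integral_inner)
  show "(\<lambda>s. \<beta> s *\<^sub>R g s) integrable_on {a..b}" by (rule integrable_scaleR_continuous[OF \<beta> g])
  show "(\<lambda>s. \<bar>\<beta> s\<bar> * norm (g s)) integrable_on {a..b}"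
    using absolutely_integrable_times_continuous[OF set_integrable_abs[OF \<beta>], of "\<lambda>s. norm (g s)"] g
    by (simp add: continuous_on_norm set_lebesgue_integral_eq_integral(1))
qed simp

lemma continuous_on_dominated_by_dist:
  fixes f :: "'a::metric_space \<Rightarrow> 'b::metric_space" and h :: "'a \<Rightarrow> 'c::metric_space"
  assumes h: "continuous_on S h" and K: "K \<ge> 0"
    and le: "\<And>x y. x \<in> S \<Longrightarrow> y \<in> S \<Longrightarrow> dist (f x) (f y) \<le> K * dist (h x) (h y)"
  shows "continuous_on S f"
  unfolding continuous_on_iff
proof (intro ballI allI impI)
  fix x e assume x: "x \<in> S" and e: "(0::real) < e"
  then obtain d where d: "d > 0" and dh: "\<And>x'. x' \<in> S \<Longrightarrow> dist x' x < d \<Longrightarrow> dist (h x') (h x) < e / (K + 1)"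
    using h K unfolding continuous_on_iff by (metis divide_pos_pos add_nonneg_pos zero_less_one)
  show "\<exists>d>0. \<forall>x'\<in>S. dist x' x < d \<longrightarrow> dist (f x') (f x) < e"
  proof (intro exI conjI ballI impI, fact d)
    fix x' assume x': "x' \<in> S" "dist x' x < d"
    have "dist (f x') (f x) \<le> K * (e / (K + 1))"
      using le[OF x'(1) x] mult_left_mono[OF less_imp_le[OF dh[OF x']] K] by linarith
    also have "\<dots> < e" using e K by (simp add: field_simps)
    finally show "dist (f x') (f x) < e" .
  qed
qed

lemma continuous_on_indefinite_integral_scaleR:
  fixes \<beta> :: "real \<Rightarrow> real" and g :: "real \<Rightarrow> 'a::{real_inner,complete_space}"
  assumes \<beta>: "\<beta> absolutely_integrable_on {a..b}" and g: "continuous_on {a..b} g"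
  shows "continuous_on {a..b} (\<lambda>t. integral {a..t} (\<lambda>s. \<beta> s *\<^sub>R g s))"
proof -
  obtain K where K: "K \<ge> 0" and Kb: "\<And>x. x \<in> {a..b} \<Longrightarrow> norm (g x) \<le> K"
    using continuous_on_compact_bound[OF compact_Icc g] by blast
  define \<Phi> where "\<Phi> t = integral {a..t} (\<lambda>s. \<bar>\<beta> s\<bar>)" for t
  have \<beta>': "(\<lambda>s. \<bar>\<beta> s\<bar>) absolutely_integrable_on {c..d}" "\<beta> absolutely_integrable_on {c..d}"
    if "a \<le> c" "d \<le> b" for c d
    using absolutely_integrable_on_subinterval[OF set_integrable_abs[OF \<beta>]]
      absolutely_integrable_on_subinterval[OF \<beta>] that by auto
  have \<Phi>c: "continuous_on {a..b} \<Phi>" unfolding \<Phi>_def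
    by (rule indefinite_integral_continuous_1) (use \<beta>'(1) set_lebesgue_integral_eq_integral(1) in blast)
  have key: "dist (integral {a..x} (\<lambda>s. \<beta> s *\<^sub>R g s)) (integral {a..y} (\<lambda>s. \<beta> s *\<^sub>R g s)) \<le> K * (\<Phi> y - \<Phi> x)"
    if xy: "a \<le> x" "x \<le> y" "y \<le> b" for x y
  proof -
    have gc: "continuous_on {c..d} g" if "a \<le> c" "d \<le> b" for c d
      using continuous_on_subset[OF g] that by auto
    have "integral {a..x} (\<lambda>s. \<beta> s *\<^sub>R g s) + integral {x..y} (\<lambda>s. \<beta> s *\<^sub>R g s) = integral {a..y} (\<lambda>s. \<beta> s *\<^sub>R g s)"
      using xy by (intro integral_combine_inner integrable_scaleR_continuous \<beta>' gc) auto
    then have "dist (integral {a..x} (\<lambda>s. \<beta> s *\<^sub>R g s)) (integral {a..y} (\<lambda>s. \<beta> s *\<^sub>R g s))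
        = norm (integral {x..y} (\<lambda>s. \<beta> s *\<^sub>R g s))"
      by (metis add_diff_cancel_left' dist_norm norm_minus_commute)
    also have "\<dots> \<le> integral {x..y} (\<lambda>s. \<bar>\<beta> s\<bar> * norm (g s))"
      using xy by (intro norm_integral_scaleR_le \<beta>' gc) auto
    also have "\<dots> \<le> integral {x..y} (\<lambda>s. K * \<bar>\<beta> s\<bar>)"
    proof (rule integral_le)
      show "(\<lambda>s. \<bar>\<beta> s\<bar> * norm (g s)) integrable_on {x..y}"
        using absolutely_integrable_times_continuous[OF \<beta>'(1) continuous_on_norm[OF gc]] xy
        by (simp add: set_lebesgue_integral_eq_integral(1))
      show "(\<lambda>s. K * \<bar>\<beta> s\<bar>) integrable_on {x..y}"
        using \<beta>'(1)[of x y] xy by (simp add: set_lebesgue_integral_eq_integral(1))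
      show "\<bar>\<beta> s\<bar> * norm (g s) \<le> K * \<bar>\<beta> s\<bar>" if "s \<in> {x..y}" for s
        using mult_left_mono[OF Kb, of s "\<bar>\<beta> s\<bar>"] that xy by (simp add: mult.commute)
    qed
    also have "\<dots> = K * (\<Phi> y - \<Phi> x)"
      using Henstock_Kurzweil_Integration.integral_combine[where f="\<lambda>s. \<bar>\<beta> s\<bar>" and a=a and c=x and b=y] \<beta>'(1)[of a y] xy
      by (simp add: \<Phi>_def set_lebesgue_integral_eq_integral(1))
    finally show ?thesis .
  qed
  show ?thesis
  proof (rule continuous_on_dominated_by_dist[OF \<Phi>c K])
    fix x y assume xy: "x \<in> {a..b}" "y \<in> {a..b}"
    have "K * (\<Phi> y - \<Phi> x) \<le> K * dist (\<Phi> x) (\<Phi> y)" "K * (\<Phi> x - \<Phi> y) \<le> K * dist (\<Phi> x) (\<Phi> y)"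
      using K by (auto intro!: mult_left_mono simp: dist_real_def)
    then show "dist (integral {a..x} (\<lambda>s. \<beta> s *\<^sub>R g s)) (integral {a..y} (\<lambda>s. \<beta> s *\<^sub>R g s)) \<le> K * dist (\<Phi> x) (\<Phi> y)"
      using key[of x y] key[of y x] xy by (cases "x \<le> y") (auto simp: dist_commute)
  qed
qed

lemma loc_integrable_absolutely_integrable:
  assumes "loc_integrable \<alpha>"
  shows "\<alpha> absolutely_integrable_on {a..b}"
proof -
  have i: "integrable lborel (\<lambda>x. indicator {a..b} x *\<^sub>R \<alpha> x)"
    using assms by (simp add: loc_integrable_def set_integrable_def)
  then have m: "(\<lambda>x. indicator {a..b} x *\<^sub>R \<alpha> x) \<in> borel_measurable lborel"
    by (rule borel_measurable_integrable)
  show ?thesis using integrable_completion[OF m] i by (simp add: set_integrable_def)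
qed

lemma loc_integrable_integrable_on:
  "loc_integrable \<alpha> \<Longrightarrow> \<alpha> integrable_on {a..b}"
  by (rule set_lebesgue_integral_eq_integral(1)[OF loc_integrable_absolutely_integrable])

lemma loc_integrable_LINT_eq_integral:
  "loc_integrable \<alpha> \<Longrightarrow> (LINT x:{a..b}|lborel. \<alpha> x) = integral {a..b} \<alpha>"
  unfolding loc_integrable_def by (rule set_borel_integral_eq_integral(2)) blast

lemma integral_le_AE:
  fixes f g :: "real \<Rightarrow> real"
  assumes f: "f integrable_on S" and g: "g integrable_on S" and ae: "AE x in lborel. f x \<le> g x"
  shows "integral S f \<le> integral S g"
proof -
  obtain N where sub: "{x. \<not> f x \<le> g x} \<subseteq> N" and N: "N \<in> null_sets lborel"
    using ae by (auto elim!: AE_E simp: null_sets_def)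
  then have negN: "negligible N" by (simp add: negligible_iff_null_sets null_sets_completionI)
  define f' where "f' x = (if x \<in> N then g x else f x)" for x
  have "integral S f = integral S f'" using negN by (intro integral_spike[of N]) (auto simp: f'_def)
  also have "\<dots> \<le> integral S g"
    using sub by (intro integral_le integrable_spike[OF f negN] g) (auto simp: f'_def)
  finally show ?thesis .
qed

lemma integrable_times_continuous:
  fixes \<beta> \<theta> :: "real \<Rightarrow> real"
  assumes "\<beta> absolutely_integrable_on {a..b}" "continuous_on {a..b} \<theta>"
  shows "(\<lambda>s. \<beta> s * \<theta> s) integrable_on {a..b}"
  using absolutely_integrable_times_continuous[OF assms] set_lebesgue_integral_eq_integral(1) by blast

lemma integral_times_exp_le:
  fixes k :: "real \<Rightarrow> real"
  assumes k: "k absolutely_integrable_on {a..t}" and k0: "\<And>s. s \<in> {a..t} \<Longrightarrow> 0 \<le> k s" and l: "l \<ge> 0"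
  shows "integral {a..t} (\<lambda>s. k s * exp (l * s)) \<le> exp (l * t) * integral {a..t} k"
proof -
  have "integral {a..t} (\<lambda>s. k s * exp (l * s)) \<le> integral {a..t} (\<lambda>s. exp (l * t) * k s)"
  proof (rule integral_le)
    show "(\<lambda>s. k s * exp (l * s)) integrable_on {a..t}"
      by (rule integrable_times_continuous[OF k]) (intro continuous_intros)
    show "(\<lambda>s. exp (l * t) * k s) integrable_on {a..t}"
      using set_lebesgue_integral_eq_integral(1)[OF k] by simp
    show "k s * exp (l * s) \<le> exp (l * t) * k s" if "s \<in> {a..t}" for s
      using k0[OF that] that l by (simp add: mult.commute mult_left_mono mult_right_mono)
  qed
  then show ?thesis by simp
qed

text \<open>The weight \<open>e\<^sup>l\<^sup>t\<close> with large \<open>l\<close> makes the Volterra kernel \<open>k\<close> contractive: the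
  part of the integral near \<open>t\<close> is small by absolute continuity of \<open>\<integral>k\<close>, the rest is damped
  by \<open>e\<^sup>-\<^sup>l\<^sup>h\<close>.\<close>

lemma exponential_weight_for_kernel:
  fixes k :: "real \<Rightarrow> real"
  assumes k: "k absolutely_integrable_on {0..T}" and k0: "\<And>s. s \<in> {0..T} \<Longrightarrow> 0 \<le> k s" and c: "c > 0"
  obtains l where "l \<ge> 0" "\<And>t. t \<in> {0..T} \<Longrightarrow> integral {0..t} (\<lambda>s. k s * exp (l * s)) \<le> c * exp (l * t)"
proof -
  define K where "K t = integral {0..t} k" for t
  have ki: "k integrable_on {0..T}" by (rule set_lebesgue_integral_eq_integral(1)[OF k])
  have kab: "k absolutely_integrable_on {a..b}" if "0 \<le> a" "b \<le> T" for a b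
    using absolutely_integrable_on_subinterval[OF k] that by auto
  have Kdiff: "integral {a..b} k = K b - K a" if "0 \<le> a" "a \<le> b" "b \<le> T" for a b
    using Henstock_Kurzweil_Integration.integral_combine[OF that(1,2) integrable_on_subinterval[OF ki]]
      that by (simp add: K_def)
  have Kmono: "K a \<le> K T" if "0 \<le> a" "a \<le> T" for a
    using Kdiff[OF that order_refl] integral_nonneg[OF integrable_on_subinterval[OF ki], of a T] k0 that
    by auto
  obtain h where h: "h > 0" and hK: "\<And>x y. x \<in> {0..T} \<Longrightarrow> y \<in> {0..T} \<Longrightarrow> dist y x < h \<Longrightarrow> dist (K y) (K x) < c/2"
    using compact_uniformly_continuous[OF indefinite_integral_continuous_1[OF ki] compact_Icc] c
    unfolding uniformly_continuous_on_def K_def by (metis half_gt_zero)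
  define KT where "KT = max (K T) 0"
  define l where "l = ln (2 * KT / c + 1) / (h / 2)"
  have KT0: "KT \<ge> 0" by (simp add: KT_def)
  have l0: "l \<ge> 0" using KT0 c h by (simp add: l_def)
  have el: "exp (l * (h / 2)) = 2 * KT / c + 1" using h KT0 c by (simp add: l_def add_nonneg_pos)
  have weighted: "integral {a..t} (\<lambda>s. k s * exp (l * s)) \<le> exp (l * t) * (K t - K a)"
    if "0 \<le> a" "a \<le> t" "t \<le> T" for a t
  proof -
    have "integral {a..t} (\<lambda>s. k s * exp (l * s)) \<le> exp (l * t) * integral {a..t} k"
      by (rule integral_times_exp_le) (use that k0 kab l0 in auto)
    then show ?thesis using Kdiff[OF that] by simp
  qed
  have near: "integral {a..t} (\<lambda>s. k s * exp (l * s)) \<le> c / 2 * exp (l * t)"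
    if "0 \<le> a" "a \<le> t" "t \<le> T" "t - a < h" for a t
  proof -
    have "dist (K t) (K a) < c / 2" using hK[of a t] that by (simp add: dist_real_def)
    then have "K t - K a < c / 2" unfolding dist_real_def by linarith
    then have "exp (l * t) * (K t - K a) \<le> exp (l * t) * (c / 2)" by (intro mult_left_mono) auto
    with weighted[of a t] that have "integral {a..t} (\<lambda>s. k s * exp (l * s)) \<le> exp (l * t) * (c / 2)"
      by linarith
    then show ?thesis by (simp only: mult.commute)
  qed
  show ?thesis
  proof (rule that[OF l0])
    fix t assume t: "t \<in> {0..T}"
    show "integral {0..t} (\<lambda>s. k s * exp (l * s)) \<le> c * exp (l * t)"
    proof (cases "t < h")
      case True
      then have "integral {0..t} (\<lambda>s. k s * exp (l * s)) \<le> c / 2 * exp (l * t)" using near[of 0 t] t by simp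
      also have "\<dots> \<le> c * exp (l * t)" using c by (intro mult_right_mono) auto
      finally show ?thesis .
    next
      case False
      define t0 where "t0 = t - h / 2"
      have t0: "0 \<le> t0" "t0 \<le> t" using False h by (auto simp: t0_def)
      have "integral {0..t0} (\<lambda>s. k s * exp (l * s)) \<le> exp (l * t0) * KT"
      proof -
        have "exp (l * t0) * (K t0 - K 0) \<le> exp (l * t0) * KT"
          using Kmono[of t0] t0 t by (intro mult_left_mono) (auto simp: K_def KT_def)
        moreover have "t0 \<le> T" using t0 t by simp
        ultimately show ?thesis using weighted[of 0 t0] t0 by linarith
      qed
      also have "\<dots> = exp (l * t) * (KT / exp (l * (h / 2)))"
        by (simp add: t0_def right_diff_distrib exp_diff)
      also have "\<dots> \<le> exp (l * t) * (c / 2)"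
        using el c KT0 by (intro mult_left_mono) (simp_all add: field_simps)
      finally have "integral {0..t0} (\<lambda>s. k s * exp (l * s)) + integral {t0..t} (\<lambda>s. k s * exp (l * s))
          \<le> c * exp (l * t)"
        using near[of t0 t] t0 t h by (simp add: t0_def algebra_simps)
      moreover have "(\<lambda>s. k s * exp (l * s)) integrable_on {0..t}"
        using t by (intro integrable_times_continuous kab) (auto intro!: continuous_intros)
      ultimately show ?thesis
        using Henstock_Kurzweil_Integration.integral_combine[OF t0] by metis
    qed
  qed
qed

lemma gronwall_exponential_weight:
  fixes e k :: "real \<Rightarrow> real"
  assumes T: "0 \<le> T" and k: "k absolutely_integrable_on {0..T}" and k0: "\<And>s. s \<in> {0..T} \<Longrightarrow> 0 \<le> k s"
    and ec: "continuous_on {0..T} e" and e0: "\<And>s. s \<in> {0..T} \<Longrightarrow> 0 \<le> e s" and \<delta>: "0 \<le> \<delta>" and l: "l \<ge> 0"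
    and ker: "\<And>t. t \<in> {0..T} \<Longrightarrow> integral {0..t} (\<lambda>s. k s * exp (l * s)) \<le> exp (l * t) / 2"
    and le: "\<And>t. t \<in> {0..T} \<Longrightarrow> e t \<le> \<delta> + integral {0..t} (\<lambda>s. k s * e s)"
    and t: "t \<in> {0..T}"
  shows "e t \<le> 2 * \<delta> * exp (l * T)"
proof -
  define q where "q t = e t * exp (- (l * t))" for t
  obtain ts where ts: "ts \<in> {0..T}" and tmax: "\<And>y. y \<in> {0..T} \<Longrightarrow> q y \<le> q ts"
    using continuous_attains_sup[OF compact_Icc _ continuous_on_mult[OF ec]] T
    unfolding q_def by (metis atLeastAtMost_iff continuous_on_exp continuous_on_minus
      continuous_on_mult_left continuous_on_id empty_iff order_refl)
  define S where "S = q ts"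
  have eS: "e s \<le> S * exp (l * s)" if "s \<in> {0..T}" for s
    using tmax[OF that] by (simp add: S_def q_def exp_minus field_simps)
  have "e ts \<le> \<delta> + integral {0..ts} (\<lambda>s. S * (k s * exp (l * s)))"
  proof -
    have sub: "{0..ts} \<subseteq> {0..T}" using ts by auto
    have kt: "k absolutely_integrable_on {0..ts}" using absolutely_integrable_on_subinterval[OF k sub] .
    have "integral {0..ts} (\<lambda>s. k s * e s) \<le> integral {0..ts} (\<lambda>s. S * (k s * exp (l * s)))"
    proof (rule integral_le)
      show "(\<lambda>s. k s * e s) integrable_on {0..ts}"
        by (rule integrable_times_continuous[OF kt continuous_on_subset[OF ec sub]])
      show "(\<lambda>s. S * (k s * exp (l * s))) integrable_on {0..ts}"
        using integrable_times_continuous[OF kt, of "\<lambda>s. exp (l * s)"] integrable_cmul[of _ _ S]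
        by (force intro: continuous_intros)
      show "k s * e s \<le> S * (k s * exp (l * s))" if "s \<in> {0..ts}" for s
        using mult_left_mono[OF eS k0, of s] that sub by (auto simp: algebra_simps)
    qed
    then show ?thesis using le[OF ts] by linarith
  qed
  also have "\<dots> \<le> \<delta> + S * (exp (l * ts) / 2)"
  proof -
    have "S \<ge> 0" using e0[OF ts] by (simp add: S_def q_def)
    then have "S * integral {0..ts} (\<lambda>s. k s * exp (l * s)) \<le> S * (exp (l * ts) / 2)"
      using ker[OF ts] by (rule mult_left_mono[rotated])
    then show ?thesis by simp
  qed
  finally have "S \<le> \<delta> * exp (- (l * ts)) + S / 2"
    by (simp add: S_def q_def exp_minus field_simps)
  moreover have "\<delta> * exp (- (l * ts)) \<le> \<delta>" using \<delta> l ts by (simp add: mult_left_le)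
  ultimately have "S \<le> 2 * \<delta>" by linarith
  moreover have "exp (l * t) \<le> exp (l * T)" using t l by (simp add: mult_left_mono)
  ultimately show ?thesis
    using eS[OF t] \<delta> mult_mono[of S "2 * \<delta>" "exp (l * t)" "exp (l * T)"] by (smt (verit) exp_gt_zero)
qed

lemma uniformly_Cauchy_on_geometric:
  fixes f :: "nat \<Rightarrow> 'a \<Rightarrow> 'b::real_normed_vector"
  assumes geom: "\<And>m x. x \<in> S \<Longrightarrow> norm (f (Suc m) x - f m x) \<le> M * q ^ m" and q: "0 \<le> q" "q < 1"
  shows "uniformly_Cauchy_on S f"
proof (rule uniformly_Cauchy_onI')
  fix e :: real assume e: "e > 0"
  have tail: "norm (f p x - f m x) \<le> M * (q ^ m - q ^ p) / (1 - q)" if "m \<le> p" "x \<in> S" for m p x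
    using that(1)
  proof (induction p rule: dec_induct)
    case (step p)
    have "norm (f (Suc p) x - f m x) \<le> norm (f (Suc p) x - f p x) + norm (f p x - f m x)"
      by (rule norm_diff_triangle_le[of _ "f p x"]) simp_all
    also have "\<dots> \<le> M * q ^ p + M * (q ^ m - q ^ p) / (1 - q)" using step.IH geom[OF that(2), of p] by linarith
    also have "\<dots> = M * (q ^ m - q ^ Suc p) / (1 - q)" using q by (simp add: field_simps)
    finally show ?case .
  qed simp
  obtain m0 where m0: "q ^ m0 < e * (1 - q) / (\<bar>M\<bar> + 1)"
    using real_arch_pow_inv[of "e * (1 - q) / (\<bar>M\<bar> + 1)" q] e q by auto
  show "\<exists>N. \<forall>x\<in>S. \<forall>m\<ge>N. \<forall>n>m. dist (f m x) (f n x) < e"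
  proof (intro exI[of _ m0] ballI allI impI)
    fix x m n assume x: "x \<in> S" and mn: "m0 \<le> m" "m < n"
    have "dist (f m x) (f n x) \<le> M * (q ^ m - q ^ n) / (1 - q)"
      using tail[of m n x] mn x by (simp add: dist_norm norm_minus_commute)
    also have "\<dots> \<le> \<bar>M\<bar> * q ^ m0 / (1 - q)"
    proof -
      have "q ^ m \<le> q ^ m0" "q ^ n \<le> q ^ m" "0 \<le> q ^ n"
        using q mn by (auto intro!: power_decreasing)
      then have "q ^ m - q ^ n \<le> q ^ m0" "0 \<le> q ^ m - q ^ n" by linarith+
      then have "M * (q ^ m - q ^ n) \<le> \<bar>M\<bar> * q ^ m0"
        by (metis abs_ge_self abs_ge_zero mult_mono order_trans)
      then show ?thesis using q by (simp add: divide_right_mono)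
    qed
    also have "\<dots> < e" using m0 q e by (simp add: field_simps) (smt (verit) mult_left_mono zero_le_power)
    finally show "dist (f m x) (f n x) < e" .
  qed
qed
lemma tendsto_Volterra_uniform_limit:
  fixes \<Gamma> :: "(real \<Rightarrow> 'a::real_normed_vector) \<Rightarrow> real \<Rightarrow> 'a"
  assumes k: "k absolutely_integrable_on {0..T}" and k0: "\<And>s. s \<in> {0..T} \<Longrightarrow> 0 \<le> k s"
    and contr: "\<And>v w t. continuous_on {0..T} v \<Longrightarrow> continuous_on {0..T} w \<Longrightarrow> t \<in> {0..T} \<Longrightarrow>
                   norm (\<Gamma> v t - \<Gamma> w t) \<le> integral {0..t} (\<lambda>s. k s * norm (v s - w s))"
    and ws: "\<And>m. continuous_on {0..T} (ws m)" and w: "continuous_on {0..T} w"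
    and lim: "uniform_limit {0..T} ws w sequentially" and t: "t \<in> {0..T}"
  shows "(\<lambda>m. \<Gamma> (ws m) t) \<longlonglongrightarrow> \<Gamma> w t"
proof (rule tendstoI)
  fix e :: real assume e: "e > 0"
  have sub: "{0..t} \<subseteq> {0..T}" using t by auto
  have kt: "k absolutely_integrable_on {0..t}" by (rule absolutely_integrable_on_subinterval[OF k sub])
  define K where "K = integral {0..T} k"
  have Kt: "integral {0..t} k \<le> K" "0 \<le> integral {0..t} k"
    using k0 sub set_lebesgue_integral_eq_integral(1)[OF k] set_lebesgue_integral_eq_integral(1)[OF kt]
    unfolding K_def by (auto intro!: integral_subset_le integral_nonneg)
  have "e / (K + 1) > 0" using e Kt by simp
  then have "\<forall>\<^sub>F m in sequentially. \<forall>s\<in>{0..T}. dist (ws m s) (w s) < e / (K + 1)"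
    using lim by (auto simp: uniform_limit_iff)
  then show "\<forall>\<^sub>F m in sequentially. dist (\<Gamma> (ws m) t) (\<Gamma> w t) < e"
  proof eventually_elim
    case (elim m)
    have "dist (\<Gamma> (ws m) t) (\<Gamma> w t) \<le> integral {0..t} (\<lambda>s. k s * norm (ws m s - w s))"
      using contr[OF ws w t] by (simp add: dist_norm)
    also have "\<dots> \<le> integral {0..t} (\<lambda>s. k s * (e / (K + 1)))"
    proof (rule integral_le)
      show "(\<lambda>s. k s * norm (ws m s - w s)) integrable_on {0..t}"
        using sub by (intro integrable_times_continuous kt continuous_on_subset[OF _ sub]) (intro continuous_intros ws w)
      show "(\<lambda>s. k s * (e / (K + 1))) integrable_on {0..t}"
        by (intro integrable_times_continuous kt continuous_intros)
      show "k s * norm (ws m s - w s) \<le> k s * (e / (K + 1))" if "s \<in> {0..t}" for s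
        using elim that sub k0 by (intro mult_left_mono) (auto simp: dist_norm intro: less_imp_le)
    qed
    also have "\<dots> = integral {0..t} k * (e / (K + 1))" by simp
    also have "\<dots> \<le> K * (e / (K + 1))" using Kt e by (intro mult_right_mono) auto
    also have "\<dots> < e" using Kt e by (simp add: field_simps)
    finally show ?case .
  qed
qed

lemma fixed_point_exponential_weight:
  fixes \<Gamma> :: "(real \<Rightarrow> 'a::{real_normed_vector,complete_space}) \<Rightarrow> real \<Rightarrow> 'a"
  assumes T: "0 \<le> T" and k: "k absolutely_integrable_on {0..T}" and k0: "\<And>s. s \<in> {0..T} \<Longrightarrow> 0 \<le> k s"
    and l: "l \<ge> 0" and ker: "\<And>t. t \<in> {0..T} \<Longrightarrow> integral {0..t} (\<lambda>s. k s * exp (l * s)) \<le> exp (l * t) / 2"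
    and cont: "\<And>w. continuous_on {0..T} w \<Longrightarrow> continuous_on {0..T} (\<Gamma> w)"
    and contr: "\<And>v w t. continuous_on {0..T} v \<Longrightarrow> continuous_on {0..T} w \<Longrightarrow> t \<in> {0..T} \<Longrightarrow>
                   norm (\<Gamma> v t - \<Gamma> w t) \<le> integral {0..t} (\<lambda>s. k s * norm (v s - w s))"
  obtains w where "continuous_on {0..T} w" "\<And>t. t \<in> {0..T} \<Longrightarrow> \<Gamma> w t = w t"
proof -
  define ws where "ws m = (\<Gamma> ^^ m) (\<lambda>_. 0)" for m
  have ws_Suc: "ws (Suc m) = \<Gamma> (ws m)" for m by (simp add: ws_def)
  have wsc: "continuous_on {0..T} (ws m)" for m by (induction m) (auto simp: ws_def intro: cont)
  obtain C where C: "C \<ge> 0" and C1: "\<And>t. t \<in> {0..T} \<Longrightarrow> norm (ws 1 t - ws 0 t) \<le> C"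
    using continuous_on_compact_bound[OF compact_Icc continuous_on_diff[OF wsc wsc]] by metis
  have step: "norm (ws (Suc m) t - ws m t) \<le> C * (1/2)^m * exp (l * t)" if "t \<in> {0..T}" for m t
    using that
  proof (induction m arbitrary: t)
    case 0
    then show ?case using C1[OF 0] C l by (simp add: mult_le_cancel_left1 order_trans)
  next
    case (Suc m)
    have sub: "{0..t} \<subseteq> {0..T}" using Suc.prems by auto
    have kt: "k absolutely_integrable_on {0..t}" by (rule absolutely_integrable_on_subinterval[OF k sub])
    have "norm (ws (Suc (Suc m)) t - ws (Suc m) t) \<le> integral {0..t} (\<lambda>s. k s * norm (ws (Suc m) s - ws m s))"
      using contr[OF wsc[of "Suc m"] wsc[of m] Suc.prems] by (simp only: ws_Suc)
    also have "\<dots> \<le> integral {0..t} (\<lambda>s. (C * (1/2)^m) * (k s * exp (l * s)))"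
    proof (rule integral_le)
      show "(\<lambda>s. k s * norm (ws (Suc m) s - ws m s)) integrable_on {0..t}"
        by (intro integrable_times_continuous kt continuous_on_subset[OF _ sub]) (intro continuous_intros wsc)
      show "(\<lambda>s. (C * (1/2)^m) * (k s * exp (l * s))) integrable_on {0..t}"
        by (rule integrable_on_mult_right[OF integrable_times_continuous[OF kt]])
          (intro continuous_intros)
      show "k s * norm (ws (Suc m) s - ws m s) \<le> (C * (1/2)^m) * (k s * exp (l * s))" if "s \<in> {0..t}" for s
        using mult_left_mono[OF Suc.IH k0, of s] that sub by (auto simp: algebra_simps)
    qed
    also have "\<dots> = (C * (1/2)^m) * integral {0..t} (\<lambda>s. k s * exp (l * s))" by simp
    also have "\<dots> \<le> (C * (1/2)^m) * (exp (l * t) / 2)"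
      using ker[OF Suc.prems] C by (intro mult_left_mono) auto
    finally show ?case by simp
  qed
  have "uniformly_Cauchy_on {0..T} ws"
  proof (rule uniformly_Cauchy_on_geometric[where M = "C * exp (l * T)" and q = "1/2"])
    fix m t assume t: "t \<in> {0..T}"
    have "C * (1/2)^m * exp (l * t) \<le> C * (1/2)^m * exp (l * T)"
      using t l C by (intro mult_left_mono) (auto intro: mult_left_mono)
    then show "norm (ws (Suc m) t - ws m t) \<le> C * exp (l * T) * (1/2)^m"
      using step[OF t, of m] by (simp add: algebra_simps)
  qed simp_all
  then obtain w where lim: "uniform_limit {0..T} ws w sequentially"
    using Cauchy_uniformly_convergent unfolding uniformly_convergent_on_def by blast
  have wc: "continuous_on {0..T} w" by (rule uniform_limit_theorem[OF _ lim]) (simp_all add: wsc)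
  show ?thesis
  proof (rule that[OF wc])
    fix t assume t: "t \<in> {0..T}"
    have "(\<lambda>m. ws (Suc m) t) \<longlonglongrightarrow> \<Gamma> w t"
      unfolding ws_Suc by (rule tendsto_Volterra_uniform_limit[OF k k0 contr wsc wc lim t])
    moreover have "(\<lambda>m. ws (Suc m) t) \<longlonglongrightarrow> w t"
      using tendsto_uniform_limitI[OF lim t] by (rule LIMSEQ_Suc)
    ultimately show "\<Gamma> w t = w t" by (rule LIMSEQ_unique)
  qed
qed

lemma uniform_limit_equicontinuous:
  fixes F :: "nat \<Rightarrow> 'a::metric_space \<Rightarrow> 'b::metric_space" and G :: "'a \<Rightarrow> 'c::metric_space"
  assumes S: "compact S" and G: "continuous_on S G" and P: "continuous_on S P"
    and equi: "\<And>n x y. x \<in> S \<Longrightarrow> y \<in> S \<Longrightarrow> dist (F n x) (F n y) \<le> dist (G x) (G y)"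
    and pw: "\<And>x. x \<in> S \<Longrightarrow> (\<lambda>n. F n x) \<longlonglongrightarrow> P x"
  shows "uniform_limit S F P sequentially"
  unfolding uniform_limit_iff
proof (intro allI impI)
  fix e :: real assume e: "e > 0"
  then have e3: "e / 3 > 0" by simp
  obtain d1 where d1: "d1 > 0" and dG: "\<And>x y. x \<in> S \<Longrightarrow> y \<in> S \<Longrightarrow> dist y x < d1 \<Longrightarrow> dist (G y) (G x) < e / 3"
    using compact_uniformly_continuous[OF G S] e3 unfolding uniformly_continuous_on_def by metis
  obtain d2 where d2: "d2 > 0" and dP: "\<And>x y. x \<in> S \<Longrightarrow> y \<in> S \<Longrightarrow> dist y x < d2 \<Longrightarrow> dist (P y) (P x) < e / 3"
    using compact_uniformly_continuous[OF P S] e3 unfolding uniformly_continuous_on_def by metis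
  obtain C where C: "C \<subseteq> S" "finite C" and cover: "S \<subseteq> (\<Union>p\<in>C. ball p (min d1 d2))"
  proof (rule compactE_image[OF S, of S "\<lambda>p. ball p (min d1 d2)"])
    show "S \<subseteq> (\<Union>p\<in>S. ball p (min d1 d2))" using d1 d2 by auto
  qed auto
  have "\<forall>\<^sub>F n in sequentially. \<forall>p\<in>C. dist (F n p) (P p) < e / 3"
    using C pw e3 by (intro eventually_ball_finite ballI tendstoD) auto
  then show "\<forall>\<^sub>F n in sequentially. \<forall>x\<in>S. dist (F n x) (P x) < e"
  proof (rule eventually_mono, intro ballI)
    fix n x assume near: "\<forall>p\<in>C. dist (F n p) (P p) < e / 3" and x: "x \<in> S"
    obtain p where p: "p \<in> C" "dist p x < min d1 d2" using cover x by auto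
    have pS: "p \<in> S" using p C by auto
    have "dist (F n x) (F n p) < e / 3"
      using equi[OF x pS, of n] dG[OF pS x] p(2) by (simp add: dist_commute)
    moreover have "dist (P p) (P x) < e / 3" using dP[OF x pS] p(2) by simp
    moreover have "dist (F n p) (P p) < e / 3" using near p(1) by blast
    ultimately have "dist (F n x) (F n p) + dist (F n p) (P p) + dist (P p) (P x) < e" by linarith
    moreover have "dist (F n x) (P x) \<le> dist (F n x) (F n p) + dist (F n p) (P p) + dist (P p) (P x)"
      using dist_triangle[of "F n x" "P x" "F n p"] dist_triangle[of "F n p" "P x" "P p"] by linarith
    ultimately show "dist (F n x) (P x) < e" by linarith
  qed
qed

lemma tendsto_SUP_norm_diff_uniform_limit:
  fixes W :: "nat \<Rightarrow> 'a \<Rightarrow> 'b::real_normed_vector"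
  assumes lim: "uniform_limit S W u sequentially" and S: "S \<noteq> {}"
  shows "(\<lambda>n. SUP t\<in>S. norm (u t - W n t)) \<longlonglongrightarrow> 0"
proof (rule tendstoI)
  fix e :: real assume "e > 0"
  then have "\<forall>\<^sub>F n in sequentially. \<forall>t\<in>S. dist (W n t) (u t) < e / 2"
    using lim half_gt_zero unfolding uniform_limit_iff by blast
  then show "\<forall>\<^sub>F n in sequentially. dist (SUP t\<in>S. norm (u t - W n t)) 0 < e"
  proof eventually_elim
    case (elim n)
    then have bound: "norm (u t - W n t) \<le> e / 2" if "t \<in> S" for t
      using that by (auto simp: dist_norm norm_minus_commute less_imp_le)
    obtain t where t: "t \<in> S" using S by blast
    have "bdd_above ((\<lambda>t. norm (u t - W n t)) ` S)" using bound by (intro bdd_aboveI2)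
    then have "norm (u t - W n t) \<le> (SUP t\<in>S. norm (u t - W n t))" by (rule cSUP_upper[OF t])
    then have "0 \<le> (SUP t\<in>S. norm (u t - W n t))" by (rule order_trans[OF norm_ge_zero])
    moreover have "(SUP t\<in>S. norm (u t - W n t)) \<le> e / 2" using S bound by (rule cSUP_least)
    ultimately show ?case using \<open>e > 0\<close> by simp
  qed
qed

lemma norm_integral_scaleR_le_const:
  fixes \<gamma> :: "real \<Rightarrow> real" and h :: "real \<Rightarrow> 'a::{real_inner,complete_space}"
  assumes \<gamma>: "\<gamma> absolutely_integrable_on {a..b}" and h: "continuous_on {a..b} h"
    and e: "\<And>s. s \<in> {a..b} \<Longrightarrow> norm (h s) \<le> e"
  shows "norm (integral {a..b} (\<lambda>s. \<gamma> s *\<^sub>R h s)) \<le> e * integral {a..b} (\<lambda>s. \<bar>\<gamma> s\<bar>)"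
proof -
  have "norm (integral {a..b} (\<lambda>s. \<gamma> s *\<^sub>R h s)) \<le> integral {a..b} (\<lambda>s. \<bar>\<gamma> s\<bar> * norm (h s))"
    by (rule norm_integral_scaleR_le[OF \<gamma> h])
  also have "\<dots> \<le> integral {a..b} (\<lambda>s. e * \<bar>\<gamma> s\<bar>)"
  proof (rule integral_le)
    show "(\<lambda>s. \<bar>\<gamma> s\<bar> * norm (h s)) integrable_on {a..b}"
      by (intro integrable_times_continuous set_integrable_abs[OF \<gamma>] continuous_on_norm h)
    show "(\<lambda>s. e * \<bar>\<gamma> s\<bar>) integrable_on {a..b}"
      using set_lebesgue_integral_eq_integral(1)[OF set_integrable_abs[OF \<gamma>]] by (rule integrable_on_mult_right)
    show "\<bar>\<gamma> s\<bar> * norm (h s) \<le> e * \<bar>\<gamma> s\<bar>" if "s \<in> {a..b}" for s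
      using mult_left_mono[OF e[OF that] abs_ge_zero[of "\<gamma> s"]] by (simp add: mult.commute)
  qed
  finally show ?thesis by simp
qed

lemma integral_scaleR_split_sum:
  fixes \<theta> :: "real \<Rightarrow> real" and g :: "real \<Rightarrow> 'a::{real_normed_vector,complete_space}"
  assumes \<theta>: "\<theta> absolutely_integrable_on {a..b}" and I: "finite I"
    and \<psi>: "\<And>i. i \<in> I \<Longrightarrow> continuous_on {a..b} (\<psi> i)" and g: "continuous_on {a..b} g"
  shows "integral {a..b} (\<lambda>s. \<theta> s *\<^sub>R g s)
    = integral {a..b} (\<lambda>s. \<theta> s *\<^sub>R (g s - (\<Sum>i\<in>I. \<psi> i s *\<^sub>R v i)))
      + (\<Sum>i\<in>I. integral {a..b} (\<lambda>s. \<theta> s * \<psi> i s) *\<^sub>R v i)"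
proof -
  have i: "(\<lambda>s. (\<theta> s * \<psi> i s) *\<^sub>R v i) integrable_on {a..b}" if "i \<in> I" for i
    using integrable_times_continuous[OF \<theta> \<psi>[OF that]] by (rule integrable_on_scaleR_left)
  have si: "integral {a..b} (\<lambda>s. (\<theta> s * \<psi> i s) *\<^sub>R v i) = integral {a..b} (\<lambda>s. \<theta> s * \<psi> i s) *\<^sub>R v i"
    if "i \<in> I" for i
    by (rule integral_unique[OF has_integral_scaleR_left[OF integrable_integral]])
      (rule integrable_times_continuous[OF \<theta> \<psi>[OF that]])
  have hc: "continuous_on {a..b} (\<lambda>s. g s - (\<Sum>i\<in>I. \<psi> i s *\<^sub>R v i))"
    by (intro continuous_intros g \<psi>) simp
  have "(\<lambda>s. \<theta> s *\<^sub>R g s)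
      = (\<lambda>s. \<theta> s *\<^sub>R (g s - (\<Sum>i\<in>I. \<psi> i s *\<^sub>R v i)) + (\<Sum>i\<in>I. (\<theta> s * \<psi> i s) *\<^sub>R v i))"
    by (simp add: scaleR_diff_right scaleR_sum_right fun_eq_iff)
  then have "integral {a..b} (\<lambda>s. \<theta> s *\<^sub>R g s)
      = integral {a..b} (\<lambda>s. \<theta> s *\<^sub>R (g s - (\<Sum>i\<in>I. \<psi> i s *\<^sub>R v i)))
        + integral {a..b} (\<lambda>s. \<Sum>i\<in>I. (\<theta> s * \<psi> i s) *\<^sub>R v i)"
    using integral_add[OF integrable_scaleR_continuous[OF \<theta> hc] integrable_sum[OF I i]] by simp
  also have "integral {a..b} (\<lambda>s. \<Sum>i\<in>I. (\<theta> s * \<psi> i s) *\<^sub>R v i)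
      = (\<Sum>i\<in>I. integral {a..b} (\<lambda>s. \<theta> s * \<psi> i s) *\<^sub>R v i)"
    using integral_sum[OF I i] si by simp
  finally show ?thesis .
qed

text \<open>Weak convergence against continuous scalar test functions extends to continuous vector-valued
  ones by approximating them with finite sums \<open>\<Sum>\<^sub>i \<psi>\<^sub>i(s) g(c\<^sub>i)\<close>; only an \<open>L\<^sup>1\<close> bound on the \<open>\<gamma>\<^sub>n\<close> is needed.\<close>

lemma tendsto_integral_weak_scaleR:
  fixes \<gamma> :: "nat \<Rightarrow> real \<Rightarrow> real" and g :: "real \<Rightarrow> 'a::{real_inner,complete_space}"
  assumes \<gamma>: "\<And>n. \<gamma> n absolutely_integrable_on {a..b}"
    and bound: "\<And>n. integral {a..b} (\<lambda>s. \<bar>\<gamma> n s\<bar>) \<le> B"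
    and pw: "\<And>\<psi>. continuous_on {a..b} \<psi> \<Longrightarrow> (\<lambda>n. integral {a..b} (\<lambda>s. \<gamma> n s * \<psi> s)) \<longlonglongrightarrow> integral {a..b} \<psi>"
    and g: "continuous_on {a..b} g"
  shows "(\<lambda>n. integral {a..b} (\<lambda>s. \<gamma> n s *\<^sub>R g s)) \<longlonglongrightarrow> integral {a..b} g"
proof (rule tendstoI)
  fix e :: real assume e: "e > 0"
  define L where "L = \<bar>B\<bar> + \<bar>b - a\<bar> + 1"
  have L: "L > 0" by (simp add: L_def add_nonneg_pos)
  obtain I :: "real set set" and c \<psi> where I: "finite I" and c: "\<And>i. i \<in> I \<Longrightarrow> c i \<in> {a..b}"
    and \<psi>: "\<And>i. i \<in> I \<Longrightarrow> continuous_on {a..b} (\<psi> i)"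
    and approx: "\<And>x. x \<in> {a..b} \<Longrightarrow> norm (g x - (\<Sum>i\<in>I. \<psi> i x *\<^sub>R g (c i))) \<le> e / (2 * L)"
    by (rule partition_of_unity_approximation[OF compact_Icc g, of "e / (2 * L)"], use e L in simp, rule that)
  define h where "h x = g x - (\<Sum>i\<in>I. \<psi> i x *\<^sub>R g (c i))" for x
  have hc: "continuous_on {a..b} h" unfolding h_def by (intro continuous_intros g \<psi>) simp
  have split: "integral {a..b} (\<lambda>s. \<theta> s *\<^sub>R g s)
      = integral {a..b} (\<lambda>s. \<theta> s *\<^sub>R h s) + (\<Sum>i\<in>I. integral {a..b} (\<lambda>s. \<theta> s * \<psi> i s) *\<^sub>R g (c i))"
    if "\<theta> absolutely_integrable_on {a..b}" for \<theta>
    unfolding h_def by (rule integral_scaleR_split_sum[OF that I \<psi> g])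
  have "(\<lambda>n. \<Sum>i\<in>I. integral {a..b} (\<lambda>s. \<gamma> n s * \<psi> i s) *\<^sub>R g (c i))
      \<longlonglongrightarrow> (\<Sum>i\<in>I. integral {a..b} (\<lambda>s. 1 * \<psi> i s) *\<^sub>R g (c i))"
    using pw[OF \<psi>] by (intro tendsto_sum tendsto_scaleR tendsto_const) auto
  then have "\<forall>\<^sub>F n in sequentially. dist (\<Sum>i\<in>I. integral {a..b} (\<lambda>s. \<gamma> n s * \<psi> i s) *\<^sub>R g (c i))
      (\<Sum>i\<in>I. integral {a..b} (\<lambda>s. 1 * \<psi> i s) *\<^sub>R g (c i)) < e / 2"
    using e by (intro tendstoD) auto
  then show "\<forall>\<^sub>F n in sequentially. dist (integral {a..b} (\<lambda>s. \<gamma> n s *\<^sub>R g s)) (integral {a..b} g) < e"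
  proof eventually_elim
    case (elim n)
    have "norm (integral {a..b} (\<lambda>s. \<gamma> n s *\<^sub>R h s)) \<le> e / (2 * L) * integral {a..b} (\<lambda>s. \<bar>\<gamma> n s\<bar>)"
      using approx by (intro norm_integral_scaleR_le_const[OF \<gamma> hc]) (simp add: h_def)
    also have "\<dots> \<le> e / (2 * L) * \<bar>B\<bar>" using bound[of n] e L by (intro mult_left_mono) auto
    finally have 1: "norm (integral {a..b} (\<lambda>s. \<gamma> n s *\<^sub>R h s)) \<le> e / (2 * L) * \<bar>B\<bar>" .
    have "norm (integral {a..b} (\<lambda>s. 1 *\<^sub>R h s)) \<le> e / (2 * L) * integral {a..b} (\<lambda>s. \<bar>1::real\<bar>)"
      using approx by (intro norm_integral_scaleR_le_const hc) (auto simp: h_def)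
    also have "\<dots> \<le> e / (2 * L) * \<bar>b - a\<bar>" using e L by (intro mult_left_mono) auto
    finally have 2: "norm (integral {a..b} (\<lambda>s. 1 *\<^sub>R h s)) \<le> e / (2 * L) * \<bar>b - a\<bar>" .
    have "e / (2 * L) * \<bar>B\<bar> + e / (2 * L) * \<bar>b - a\<bar> = e / (2 * L) * (L - 1)"
      unfolding distrib_left[symmetric] by (simp add: L_def)
    also have "\<dots> < e / (2 * L) * L" using e L by (intro mult_strict_left_mono) auto
    also have "\<dots> = e / 2" using L by simp
    finally have 3: "e / (2 * L) * \<bar>B\<bar> + e / (2 * L) * \<bar>b - a\<bar> < e / 2" .
    let ?S = "\<lambda>\<theta>. \<Sum>i\<in>I. integral {a..b} (\<lambda>s. \<theta> s * \<psi> i s) *\<^sub>R g (c i)"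
    have "dist (integral {a..b} (\<lambda>s. \<gamma> n s *\<^sub>R g s)) (integral {a..b} g)
        = norm ((integral {a..b} (\<lambda>s. \<gamma> n s *\<^sub>R h s) + ?S (\<gamma> n))
               - (integral {a..b} (\<lambda>s. 1 *\<^sub>R h s) + ?S (\<lambda>_. 1)))"
      using split[OF \<gamma>] split[of "\<lambda>_. 1"] by (simp add: dist_norm)
    also have "\<dots> \<le> norm (integral {a..b} (\<lambda>s. \<gamma> n s *\<^sub>R h s)) + norm (integral {a..b} (\<lambda>s. 1 *\<^sub>R h s))
        + norm (?S (\<gamma> n) - ?S (\<lambda>_. 1))"
      using norm_diff_triangle_ineq norm_triangle_ineq4 by (smt (verit, best))
    also have "\<dots> < e" using 1 2 3 elim unfolding dist_norm by linarith
    finally show ?case .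
  qed
qed
lemma uniform_limit_integral_weak_scaleR:
  fixes \<gamma> :: "nat \<Rightarrow> real \<Rightarrow> real" and \<gamma>b :: "real \<Rightarrow> real" and g :: "real \<Rightarrow> 'a::{real_inner,complete_space}"
  assumes \<gamma>: "\<And>n. \<gamma> n absolutely_integrable_on {0..T}" and \<gamma>b: "\<gamma>b absolutely_integrable_on {0..T}"
    and dom: "\<And>n a b. 0 \<le> a \<Longrightarrow> a \<le> b \<Longrightarrow> b \<le> T \<Longrightarrow> integral {a..b} (\<lambda>s. \<bar>\<gamma> n s\<bar>) \<le> integral {a..b} \<gamma>b"
    and pw: "\<And>\<psi> t. t \<in> {0..T} \<Longrightarrow> continuous_on {0..t} \<psi> \<Longrightarrow>
               (\<lambda>n. integral {0..t} (\<lambda>s. \<gamma> n s * \<psi> s)) \<longlonglongrightarrow> integral {0..t} \<psi>"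
    and g: "continuous_on {0..T} g"
  shows "uniform_limit {0..T} (\<lambda>n t. integral {0..t} (\<lambda>s. \<gamma> n s *\<^sub>R g s)) (\<lambda>t. integral {0..t} g) sequentially"
proof -
  obtain K where K: "K \<ge> 0" and Kg: "\<And>s. s \<in> {0..T} \<Longrightarrow> norm (g s) \<le> K"
    using continuous_on_compact_bound[OF compact_Icc g] by blast
  have \<gamma>ab: "\<gamma> n absolutely_integrable_on {a..b}" "\<gamma>b integrable_on {a..b}" if "0 \<le> a" "b \<le> T" for n a b
    using absolutely_integrable_on_subinterval[OF \<gamma>, of a b]
      integrable_on_subinterval[OF set_lebesgue_integral_eq_integral(1)[OF \<gamma>b], of a b] that by auto
  have gab: "continuous_on {a..b} g" if "0 \<le> a" "b \<le> T" for a b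
    using continuous_on_subset[OF g] that by auto
  define Gb where "Gb t = integral {0..t} \<gamma>b" for t
  have equi: "dist (integral {0..x} (\<lambda>s. \<gamma> n s *\<^sub>R g s)) (integral {0..y} (\<lambda>s. \<gamma> n s *\<^sub>R g s))
      \<le> dist (K * Gb x) (K * Gb y)" if xy: "0 \<le> x" "x \<le> y" "y \<le> T" for n x y
  proof -
    have "integral {0..x} (\<lambda>s. \<gamma> n s *\<^sub>R g s) + integral {x..y} (\<lambda>s. \<gamma> n s *\<^sub>R g s)
        = integral {0..y} (\<lambda>s. \<gamma> n s *\<^sub>R g s)"
      using xy by (intro integral_combine_inner integrable_scaleR_continuous \<gamma>ab gab) auto
    then have "dist (integral {0..x} (\<lambda>s. \<gamma> n s *\<^sub>R g s)) (integral {0..y} (\<lambda>s. \<gamma> n s *\<^sub>R g s))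
        = norm (integral {x..y} (\<lambda>s. \<gamma> n s *\<^sub>R g s))"
      by (metis add_diff_cancel_left' dist_norm norm_minus_commute)
    also have "\<dots> \<le> K * integral {x..y} (\<lambda>s. \<bar>\<gamma> n s\<bar>)"
      using xy Kg by (intro norm_integral_scaleR_le_const \<gamma>ab gab) auto
    also have "\<dots> \<le> K * integral {x..y} \<gamma>b" using dom[OF xy] K by (rule mult_left_mono)
    also have "integral {x..y} \<gamma>b = Gb y - Gb x"
      using Henstock_Kurzweil_Integration.integral_combine[of 0 x y \<gamma>b] \<gamma>ab xy by (simp add: Gb_def)
    also have "K * (Gb y - Gb x) \<le> dist (K * Gb x) (K * Gb y)"
      using K by (simp add: dist_real_def abs_mult right_diff_distrib[symmetric] mult_left_mono)
    finally show ?thesis .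
  qed
  show ?thesis
  proof (rule uniform_limit_equicontinuous[OF compact_Icc, where G = "\<lambda>t. K * Gb t"])
    show "continuous_on {0..T} (\<lambda>t. K * Gb t)" unfolding Gb_def
      by (intro continuous_intros indefinite_integral_continuous_1 \<gamma>ab) auto
    show "continuous_on {0..T} (\<lambda>t. integral {0..t} g)"
      using continuous_on_indefinite_integral_scaleR[where \<beta> = "\<lambda>_. 1" and a = 0 and b = T, OF _ g] by simp
    show "dist (integral {0..x} (\<lambda>s. \<gamma> n s *\<^sub>R g s)) (integral {0..y} (\<lambda>s. \<gamma> n s *\<^sub>R g s))
        \<le> dist (K * Gb x) (K * Gb y)" if "x \<in> {0..T}" "y \<in> {0..T}" for n x y
      using equi[of x y n] equi[of y x n] that by (cases "x \<le> y") (auto simp: dist_commute)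
    show "(\<lambda>n. integral {0..t} (\<lambda>s. \<gamma> n s *\<^sub>R g s)) \<longlonglongrightarrow> integral {0..t} g" if t: "t \<in> {0..T}" for t
      using t by (intro tendsto_integral_weak_scaleR[where B = "integral {0..t} \<gamma>b"] \<gamma>ab gab pw dom) auto
  qed
qed

lemma set_integrable_times_continuous:
  fixes \<gamma> \<theta> :: "real \<Rightarrow> real"
  assumes \<gamma>: "set_integrable lborel {a..b} \<gamma>" and \<theta>: "continuous_on {a..b} \<theta>"
  shows "set_integrable lborel {a..b} (\<lambda>s. \<gamma> s * \<theta> s)"
proof -
  obtain K where K: "\<And>x. x \<in> {a..b} \<Longrightarrow> norm (\<theta> x) \<le> K"
    using continuous_on_compact_bound[OF compact_Icc \<theta>] by blast
  show ?thesis
  proof (rule set_integrable_bound[OF set_integrable_mult_right[OF \<gamma>, of K]])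
    have "(\<lambda>x. indicator {a..b} x *\<^sub>R \<gamma> x) \<in> borel_measurable lborel"
      using \<gamma> unfolding set_integrable_def by (rule borel_measurable_integrable)
    moreover have "(\<lambda>x. indicator {a..b} x *\<^sub>R \<theta> x) \<in> borel_measurable lborel"
      using borel_measurable_continuous_on_indicator[OF _ \<theta>] by simp
    ultimately have "(\<lambda>x. (indicator {a..b} x *\<^sub>R \<gamma> x) * (indicator {a..b} x *\<^sub>R \<theta> x)) \<in> borel_measurable lborel"
      by measurable
    then show "set_borel_measurable lborel {a..b} (\<lambda>s. \<gamma> s * \<theta> s)"
      unfolding set_borel_measurable_def by (rule measurable_cong[THEN iffD1, rotated]) (simp add: indicator_def)
    show "AE x in lborel. x \<in> {a..b} \<longrightarrow> norm (\<gamma> x * \<theta> x) \<le> norm (K * \<gamma> x)"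
    proof (intro AE_I2 impI)
      fix x assume "x \<in> {a..b}"
      then have "\<bar>\<theta> x\<bar> \<le> \<bar>K\<bar>" using K[of x] by simp
      then show "norm (\<gamma> x * \<theta> x) \<le> norm (K * \<gamma> x)"
        by (simp add: abs_mult) (metis abs_ge_zero mult.commute mult_left_mono)
    qed
  qed
qed

lemma weak_conv_one_tendsto_integral:
  assumes "weak_conv_one \<gamma>" and "\<And>n. loc_integrable (\<gamma> n)" and \<theta>: "continuous_on {a..b} \<theta>"
  shows "(\<lambda>n. integral {a..b} (\<lambda>s. \<gamma> n s * \<theta> s)) \<longlonglongrightarrow> integral {a..b} \<theta>"
proof -
  have "(\<lambda>n. LINT s:{a..b}|lborel. \<gamma> n s * \<theta> s) \<longlonglongrightarrow> (LINT s:{a..b}|lborel. \<theta> s)"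
    using assms unfolding weak_conv_one_def by blast
  moreover have "(LINT s:{a..b}|lborel. \<theta> s) = integral {a..b} \<theta>"
    by (rule set_borel_integral_eq_integral(2)[OF borel_integrable_atLeastAtMost'[OF \<theta>]])
  moreover have "(LINT s:{a..b}|lborel. \<gamma> n s * \<theta> s) = integral {a..b} (\<lambda>s. \<gamma> n s * \<theta> s)" for n
    using assms(2) \<theta> unfolding loc_integrable_def
    by (intro set_borel_integral_eq_integral(2) set_integrable_times_continuous) auto
  ultimately show ?thesis by simp
qed

lemma uniform_limit_weak_conv_one:
  fixes g :: "real \<Rightarrow> 'a::{real_inner,complete_space}"
  assumes wc: "weak_conv_one \<gamma>" and \<gamma>: "\<And>n. loc_integrable (\<gamma> n)" and \<gamma>b: "loc_integrable \<gamma>b"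
    and dom: "\<And>n. AE s in lborel. \<bar>\<gamma> n s\<bar> \<le> \<gamma>b s" and g: "continuous_on {0..T} g"
  shows "uniform_limit {0..T} (\<lambda>n t. integral {0..t} (\<lambda>s. \<gamma> n s *\<^sub>R g s)) (\<lambda>t. integral {0..t} g) sequentially"
proof (rule uniform_limit_integral_weak_scaleR[OF _ _ _ _ g])
  show "\<gamma> n absolutely_integrable_on {0..T}" for n by (rule loc_integrable_absolutely_integrable[OF \<gamma>])
  show "(\<lambda>s. \<bar>\<gamma>b s\<bar>) absolutely_integrable_on {0..T}"
    by (rule set_integrable_abs[OF loc_integrable_absolutely_integrable[OF \<gamma>b]])
  show "integral {a..b} (\<lambda>s. \<bar>\<gamma> n s\<bar>) \<le> integral {a..b} (\<lambda>s. \<bar>\<gamma>b s\<bar>)" for n a b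
    using dom[of n] set_lebesgue_integral_eq_integral(1)[OF set_integrable_abs[OF loc_integrable_absolutely_integrable]] \<gamma> \<gamma>b
    by (intro integral_le_AE) (auto elim!: AE_mp)
  show "(\<lambda>n. integral {0..t} (\<lambda>s. \<gamma> n s * \<psi> s)) \<longlonglongrightarrow> integral {0..t} \<psi>"
    if "continuous_on {0..t} \<psi>" for \<psi> t
    by (rule weak_conv_one_tendsto_integral[OF wc \<gamma> that])
qed

definition dominated_weak_conv_one :: "(nat \<Rightarrow> real \<Rightarrow> real) \<Rightarrow> (real \<Rightarrow> real) \<Rightarrow> bool" where
  "dominated_weak_conv_one \<gamma> \<gamma>b \<longleftrightarrow> (\<forall>n. loc_integrable (\<gamma> n)) \<and> weak_conv_one \<gamma> \<and> loc_integrable \<gamma>b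
     \<and> (\<forall>n. AE s in lborel. \<bar>\<gamma> n s\<bar> \<le> \<gamma>b s)"

definition primitive :: "(real \<Rightarrow> real) \<Rightarrow> real \<Rightarrow> real" where
  "primitive \<alpha> t = integral {0..t} \<alpha>"

lemma continuous_on_primitive: "loc_integrable \<alpha> \<Longrightarrow> continuous_on {0..T} (primitive \<alpha>)"
  unfolding primitive_def by (rule indefinite_integral_continuous_1[OF loc_integrable_integrable_on])

lemma Phi_n_eq_primitive:
  assumes "loc_integrable \<alpha>" "0 \<le> s" "s \<le> t"
  shows "Phi_n U \<alpha> t s = U (primitive \<alpha> t - primitive \<alpha> s)"
proof -
  have "primitive \<alpha> s + integral {s..t} \<alpha> = primitive \<alpha> t"
    unfolding primitive_def using assms
    by (intro Henstock_Kurzweil_Integration.integral_combine loc_integrable_integrable_on) auto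
  then have "integral {s..t} \<alpha> = primitive \<alpha> t - primitive \<alpha> s" by linarith
  then show ?thesis by (simp add: Phi_n_def loc_integrable_LINT_eq_integral[OF assms(1)])
qed

lemma dominated_weak_conv_one_uniform_limit:
  fixes g :: "real \<Rightarrow> 'a::{real_inner,complete_space}"
  assumes "dominated_weak_conv_one \<gamma> \<gamma>b" and "continuous_on {0..T} g"
  shows "uniform_limit {0..T} (\<lambda>n t. integral {0..t} (\<lambda>s. \<gamma> n s *\<^sub>R g s)) (\<lambda>t. integral {0..t} g) sequentially"
  using assms unfolding dominated_weak_conv_one_def by (intro uniform_limit_weak_conv_one) auto

lemma dominated_weak_conv_one_primitive:
  assumes "dominated_weak_conv_one \<gamma> \<gamma>b"
  shows "uniform_limit {0..T} (\<lambda>n. primitive (\<gamma> n)) (\<lambda>t. t) sequentially"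
  using dominated_weak_conv_one_uniform_limit[OF assms, of T "\<lambda>_. 1::real"]
  by (subst uniform_limit_cong') (auto simp: primitive_def)

lemma dominated_weak_conv_one_L1_bound:
  assumes "dominated_weak_conv_one \<gamma> \<gamma>b"
  obtains K where "K \<ge> 0" "\<And>n t. t \<in> {0..T} \<Longrightarrow> integral {0..t} (\<lambda>s. \<bar>\<gamma> n s\<bar>) \<le> K"
proof -
  have \<gamma>: "\<gamma> n absolutely_integrable_on {a..b}" "\<gamma>b absolutely_integrable_on {a..b}"
    and dom: "AE s in lborel. \<bar>\<gamma> n s\<bar> \<le> \<bar>\<gamma>b s\<bar>" for n a b
  proof -
    show "\<gamma> n absolutely_integrable_on {a..b}" "\<gamma>b absolutely_integrable_on {a..b}"
      using assms by (auto simp: dominated_weak_conv_one_def intro: loc_integrable_absolutely_integrable)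
    have "AE s in lborel. \<bar>\<gamma> n s\<bar> \<le> \<gamma>b s" using assms by (simp add: dominated_weak_conv_one_def)
    then show "AE s in lborel. \<bar>\<gamma> n s\<bar> \<le> \<bar>\<gamma>b s\<bar>" by eventually_elim auto
  qed
  have int: "(\<lambda>s. \<bar>f s\<bar>) integrable_on {a..b}" if "f absolutely_integrable_on {a..b}" for f :: "real \<Rightarrow> real" and a b
    using set_lebesgue_integral_eq_integral(1)[OF set_integrable_abs[OF that]] .
  show ?thesis
  proof (rule that)
    show "integral {0..T} (\<lambda>s. \<bar>\<gamma>b s\<bar>) \<ge> 0" by (rule integral_nonneg[OF int[OF \<gamma>(2)]]) simp
    fix n t assume t: "t \<in> {0..T}"
    have "integral {0..t} (\<lambda>s. \<bar>\<gamma> n s\<bar>) \<le> integral {0..t} (\<lambda>s. \<bar>\<gamma>b s\<bar>)"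
      using dom[of n] by (intro integral_le_AE int \<gamma>)
    also have "\<dots> \<le> integral {0..T} (\<lambda>s. \<bar>\<gamma>b s\<bar>)"
      using t by (intro integral_subset_le int \<gamma>) auto
    finally show "integral {0..t} (\<lambda>s. \<bar>\<gamma> n s\<bar>) \<le> integral {0..T} (\<lambda>s. \<bar>\<gamma>b s\<bar>)" .
  qed
qed

lemma dominated_weak_conv_one_kernel:
  assumes "dominated_weak_conv_one \<gamma> \<gamma>b" and c: "c \<ge> 0"
  obtains l where "l \<ge> 0"
    "\<And>n t. t \<in> {0..T} \<Longrightarrow> integral {0..t} (\<lambda>s. c * \<bar>\<gamma> n s\<bar> * exp (l * s)) \<le> exp (l * t) / 2"
proof -
  have \<gamma>: "\<gamma> n absolutely_integrable_on {a..b}" "\<gamma>b absolutely_integrable_on {a..b}"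
    and dom: "AE s in lborel. \<bar>\<gamma> n s\<bar> \<le> \<gamma>b s" for n a b
    using assms unfolding dominated_weak_conv_one_def by (auto intro: loc_integrable_absolutely_integrable)
  have k: "(\<lambda>s. c * \<bar>\<gamma>b s\<bar>) absolutely_integrable_on {0..T}"
    by (intro set_integrable_mult_right set_integrable_abs \<gamma>)
  obtain l where l: "l \<ge> 0"
    and ker: "\<And>t. t \<in> {0..T} \<Longrightarrow> integral {0..t} (\<lambda>s. c * \<bar>\<gamma>b s\<bar> * exp (l * s)) \<le> 1/2 * exp (l * t)"
    using exponential_weight_for_kernel[OF k, of "1/2"] c by auto
  show ?thesis
  proof (rule that[OF l])
    fix n t assume t: "t \<in> {0..T}"
    have "integral {0..t} (\<lambda>s. c * \<bar>\<gamma> n s\<bar> * exp (l * s)) \<le> integral {0..t} (\<lambda>s. c * \<bar>\<gamma>b s\<bar> * exp (l * s))"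
    proof (rule integral_le_AE)
      show "(\<lambda>s. c * \<bar>\<gamma> n s\<bar> * exp (l * s)) integrable_on {0..t}"
           "(\<lambda>s. c * \<bar>\<gamma>b s\<bar> * exp (l * s)) integrable_on {0..t}"
        by (intro integrable_times_continuous set_integrable_mult_right set_integrable_abs \<gamma>
            continuous_intros)+
      show "AE s in lborel. c * \<bar>\<gamma> n s\<bar> * exp (l * s) \<le> c * \<bar>\<gamma>b s\<bar> * exp (l * s)"
        using dom[of n] by eventually_elim (use c in \<open>auto intro!: mult_right_mono mult_left_mono\<close>)
    qed
    then show "integral {0..t} (\<lambda>s. c * \<bar>\<gamma> n s\<bar> * exp (l * s)) \<le> exp (l * t) / 2"
      using ker[OF t] by simp
  qed
qed

lemma continuous_on_Lipschitz_comp: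
  fixes N :: "'a::real_normed_vector \<Rightarrow> 'b::real_normed_vector"
  assumes N: "\<And>x y. norm (N x - N y) \<le> L * norm (x - y)" and L: "L \<ge> 0" and w: "continuous_on S w"
  shows "continuous_on S (\<lambda>s. N (w s))"
proof (rule continuous_on_compose2[OF _ w])
  show "continuous_on UNIV N"
    by (intro lipschitz_on_continuous_on[of L] lipschitz_onI) (use N L in \<open>auto simp: dist_norm\<close>)
qed simp

definition trunc :: "real \<Rightarrow> 'a::real_normed_vector \<Rightarrow> 'a" where
  "trunc R x = (if norm x \<le> R then x else (R / norm x) *\<^sub>R x)"

lemma norm_trunc_le: "R \<ge> 0 \<Longrightarrow> norm (trunc R x) \<le> R"
  by (auto simp: trunc_def)

lemma trunc_eq_self: "norm x \<le> R \<Longrightarrow> trunc R x = x"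
  by (simp add: trunc_def)

lemma norm_trunc_diff_le_outside:
  assumes R: "R \<ge> 0" and x: "norm x \<le> R" and y: "norm y > R"
  shows "norm (trunc R x - trunc R y) \<le> 2 * norm (x - y)"
proof -
  have "y - trunc R y = (1 - R / norm y) *\<^sub>R y" using y by (simp add: trunc_def scaleR_diff_left)
  moreover have "0 \<le> 1 - R / norm y" using y R by (simp add: divide_le_eq_1)
  ultimately have "norm (y - trunc R y) = (1 - R / norm y) * norm y" by simp
  also have "\<dots> = norm y - R" using y R by (auto simp: field_simps)
  also have "\<dots> \<le> norm (x - y)" using x norm_triangle_ineq2[of y x] by (simp add: norm_minus_commute)
  finally have "norm (y - trunc R y) \<le> norm (x - y)" .
  then show ?thesis
    using norm_triangle_ineq[of "x - y" "y - trunc R y"] x by (simp add: trunc_eq_self)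
qed

lemma norm_trunc_diff_le:
  assumes R: "R \<ge> 0"
  shows "norm (trunc R x - trunc R y) \<le> 2 * norm (x - y)"
proof (cases "norm x \<le> R" "norm y \<le> R" rule: bool.exhaust[case_product bool.exhaust])
  case (False_False)
  define a b where "a = R / norm x" and "b = R / norm y"
  have nx: "norm x > R" "norm y > R" "norm x > 0" "norm y > 0" using False_False R by auto
  have a: "0 \<le> a" "a \<le> 1" using nx R by (auto simp: a_def)
  have "trunc R x - trunc R y = a *\<^sub>R (x - y) + (a - b) *\<^sub>R y"
    using nx by (simp add: trunc_def a_def b_def algebra_simps)
  moreover have "\<bar>a - b\<bar> * norm y = a * \<bar>norm y - norm x\<bar>"
  proof -
    have "(a - b) * norm y = a * (norm y - norm x)" using nx by (simp add: a_def b_def field_simps)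
    then show ?thesis using a nx by (metis abs_mult abs_of_nonneg abs_of_pos)
  qed
  moreover have "\<bar>norm y - norm x\<bar> \<le> norm (x - y)" by (metis abs_minus_commute norm_triangle_ineq3)
  ultimately have "norm (trunc R x - trunc R y) \<le> a * norm (x - y) + a * norm (x - y)"
    using norm_triangle_ineq[of "a *\<^sub>R (x - y)" "(a - b) *\<^sub>R y"] a mult_left_mono[of _ _ a] by fastforce
  also have "\<dots> \<le> 2 * norm (x - y)" using a by (simp add: mult_left_le_one_le)
  finally show ?thesis .
next
  case True_False
  then show ?thesis using norm_trunc_diff_le_outside[OF R, of x y] by simp
next
  case False_True
  then show ?thesis using norm_trunc_diff_le_outside[OF R, of y x] by (simp add: norm_minus_commute)
qed (simp add: trunc_eq_self)

lemma norm_comp_trunc_diff_le: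
  assumes L: "L-lipschitz_on (cball 0 R) B" and R: "R \<ge> 0"
  shows "norm (B (trunc R x) - B (trunc R y)) \<le> 2 * L * norm (x - y)"
proof -
  have "trunc R x \<in> cball 0 R" "trunc R y \<in> cball 0 R" using norm_trunc_le[OF R] by auto
  from lipschitz_onD[OF L this] have "norm (B (trunc R x) - B (trunc R y)) \<le> L * norm (trunc R x - trunc R y)"
    by (simp add: dist_norm)
  also have "\<dots> \<le> L * (2 * norm (x - y))"
    by (rule mult_left_mono[OF norm_trunc_diff_le[OF R] lipschitz_on_nonneg[OF L]])
  finally show ?thesis by simp
qed

definition duhamel_n :: "('a::real_normed_vector \<Rightarrow> 'a) \<Rightarrow> (real \<Rightarrow> 'a \<Rightarrow> 'a) \<Rightarrow> (real \<Rightarrow> real)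
    \<Rightarrow> (real \<Rightarrow> real) \<Rightarrow> 'a \<Rightarrow> (real \<Rightarrow> 'a) \<Rightarrow> real \<Rightarrow> 'a" where
  "duhamel_n J U \<alpha> \<beta> u0 h t = Phi_n U \<alpha> t 0 u0 - J (integral {0..t} (\<lambda>s. \<beta> s *\<^sub>R Phi_n U \<alpha> t s (h s)))"

lemma mild_sol_n_duhamel_n:
  "mild_sol_n J U \<alpha> \<beta> B u0 T w \<longleftrightarrow> continuous_on {0..T} w \<and>
     (\<forall>t\<in>{0..T}. (\<lambda>s. \<beta> s *\<^sub>R Phi_n U \<alpha> t s (B (w s))) integrable_on {0..t} \<and>
        w t = duhamel_n J U \<alpha> \<beta> u0 (\<lambda>s. B (w s)) t)"
  by (simp add: mild_sol_n_def duhamel_n_def)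

lemma complex_structure_isometry:
  assumes "complex_structure J"
  shows "bounded_linear J" "\<And>x. norm (J x) = norm x"
proof -
  have lin: "linear J" and inner: "\<And>x y. inner (J x) (J y) = inner x y"
    using assms by (auto simp: complex_structure_def)
  show norm: "norm (J x) = norm x" for x by (simp add: norm_eq_sqrt_inner inner)
  show "bounded_linear J"
    by (rule bounded_linear_intro[where K=1]) (auto simp: linear_add[OF lin] linear_scale[OF lin] norm)
qed

locale isometric_evolution =
  fixes J :: "'a::{real_inner,complete_space} \<Rightarrow> 'a" and U :: "real \<Rightarrow> 'a \<Rightarrow> 'a"
  assumes J_bounded_linear: "bounded_linear J" and norm_J: "\<And>x. norm (J x) = norm x"
    and U_0: "U 0 = id" and U_add: "\<And>s t. U (s + t) = U s \<circ> U t"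
    and U_linear: "\<And>t. linear (U t)" and norm_U: "\<And>t x. norm (U t x) = norm x"
    and continuous_U: "\<And>x. continuous_on UNIV (\<lambda>t. U t x)"
begin

lemma U_bounded_linear: "bounded_linear (U t)"
  by (rule bounded_linear_intro[where K=1]) (auto simp: linear_add[OF U_linear] linear_scale[OF U_linear] norm_U)

lemma U_U: "U a (U b x) = U (a + b) x"
  by (simp add: U_add)

lemma U_diff: "U t x - U t y = U t (x - y)"
  by (simp add: linear_diff[OF U_linear])

lemma U_scaleR: "U t (c *\<^sub>R x) = c *\<^sub>R U t x"
  by (simp add: linear_scale[OF U_linear])

lemma norm_U_diff_U: "norm (U a x - U b x) = norm (x - U (b - a) x)"
  using norm_U[of a "x - U (b - a) x"] by (simp add: U_diff[symmetric] U_U)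

lemma norm_J_diff: "norm ((c - J x) - (c - J y)) = norm (x - y)"
  using linear_diff[OF bounded_linear.linear[OF J_bounded_linear], of y x] norm_J[of "y - x"]
  by (simp add: norm_minus_commute)

lemma continuous_on_U_comp:
  fixes r :: "'b::metric_space \<Rightarrow> real"
  assumes r: "continuous_on S r" and g: "continuous_on S g"
  shows "continuous_on S (\<lambda>s. U (r s) (g s))"
proof (rule continuous_on_iff[THEN iffD2], intro ballI allI impI)
  fix x e assume x: "x \<in> S" and e: "(0::real) < e"
  obtain d1 where d1: "d1 > 0" and h1: "\<And>x'. x' \<in> S \<Longrightarrow> dist x' x < d1 \<Longrightarrow> dist (g x') (g x) < e / 2"
    using g x e unfolding continuous_on_iff by (metis half_gt_zero)
  have "continuous_on S (\<lambda>s. U (r s) (g x))" by (rule continuous_on_compose2[OF continuous_U r]) auto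
  then obtain d2 where d2: "d2 > 0"
    and h2: "\<And>x'. x' \<in> S \<Longrightarrow> dist x' x < d2 \<Longrightarrow> dist (U (r x') (g x)) (U (r x) (g x)) < e / 2"
    using x e unfolding continuous_on_iff by (metis half_gt_zero)
  show "\<exists>d>0. \<forall>x'\<in>S. dist x' x < d \<longrightarrow> dist (U (r x') (g x')) (U (r x) (g x)) < e"
  proof (intro exI[of _ "min d1 d2"] conjI ballI impI)
    fix x' assume x': "x' \<in> S" "dist x' x < min d1 d2"
    have "dist (U (r x') (g x')) (U (r x') (g x)) = dist (g x') (g x)" by (simp add: dist_norm U_diff norm_U)
    then show "dist (U (r x') (g x')) (U (r x) (g x)) < e"
      using dist_triangle[of "U (r x') (g x')" "U (r x) (g x)" "U (r x') (g x)"] h1[of x'] h2[of x'] x' by simp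
  qed (use d1 d2 in simp)
qed

lemma U_uniformly_close:
  fixes b :: "real \<Rightarrow> 'a"
  assumes b: "continuous_on {0..T} b" and e: "e > 0"
  obtains \<rho> where "\<rho> > 0" "\<And>r s. \<bar>r\<bar> < \<rho> \<Longrightarrow> s \<in> {0..T} \<Longrightarrow> norm (U r (b s) - b s) < e"
proof -
  define K where "K = {-1..1::real} \<times> {0..T}"
  define \<phi> where "\<phi> p = U (fst p) (b (snd p)) - b (snd p)" for p
  have "continuous_on K (\<lambda>p. b (snd p))"
    unfolding K_def by (rule continuous_on_compose2[OF b continuous_on_snd]) auto
  moreover have "continuous_on K (\<lambda>p. U (fst p) (b (snd p)))"
    by (rule continuous_on_U_comp) (use calculation in \<open>auto intro!: continuous_intros\<close>)
  ultimately have "continuous_on K \<phi>" unfolding \<phi>_def by (intro continuous_on_diff)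
  then have "uniformly_continuous_on K \<phi>"
    by (rule compact_uniformly_continuous) (simp add: K_def compact_Times)
  then obtain d where d: "d > 0" and hd: "\<And>x y. x \<in> K \<Longrightarrow> y \<in> K \<Longrightarrow> dist y x < d \<Longrightarrow> dist (\<phi> y) (\<phi> x) < e"
    using e unfolding uniformly_continuous_on_def by metis
  show ?thesis
  proof (rule that[of "min d 1"])
    fix r s assume r: "\<bar>r\<bar> < min d 1" and s: "s \<in> {0..T}"
    have "(r, s) \<in> K" "(0, s) \<in> K" "dist (r, s) (0, s) < d" using r s by (auto simp: K_def dist_Pair_Pair)
    then show "norm (U r (b s) - b s) < e" using hd[of "(0, s)" "(r, s)"] by (simp add: \<phi>_def dist_norm U_0)
  qed (use d in simp)
qed

lemma integral_U:
  assumes "f integrable_on S"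
  shows "integral S (\<lambda>s. U t (f s)) = U t (integral S f)"
  using integral_linear[OF assms U_bounded_linear] by (simp add: o_def)

lemma Phi_n_apply_eq:
  assumes "loc_integrable \<alpha>" "s \<in> {0..t}"
  shows "Phi_n U \<alpha> t s x = U (primitive \<alpha> t - primitive \<alpha> s) x"
    and "Phi_n U \<alpha> t s x = U (primitive \<alpha> t) (U (- primitive \<alpha> s) x)"
  using Phi_n_eq_primitive[OF assms(1), of s t U] assms(2) by (simp_all add: U_U)

lemma integrable_Phi_n:
  assumes \<alpha>: "loc_integrable \<alpha>" and \<beta>: "loc_integrable \<beta>" and h: "continuous_on {0..t} h"
  shows "(\<lambda>s. \<beta> s *\<^sub>R Phi_n U \<alpha> t s (h s)) integrable_on {0..t}"
proof (rule integrable_eq)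
  show "(\<lambda>s. \<beta> s *\<^sub>R U (primitive \<alpha> t - primitive \<alpha> s) (h s)) integrable_on {0..t}"
    by (intro integrable_scaleR_continuous loc_integrable_absolutely_integrable[OF \<beta>] continuous_on_U_comp
        continuous_intros continuous_on_primitive[OF \<alpha>] h)
  show "\<beta> s *\<^sub>R U (primitive \<alpha> t - primitive \<alpha> s) (h s) = \<beta> s *\<^sub>R Phi_n U \<alpha> t s (h s)"
    if "s \<in> {0..t}" for s
    using Phi_n_apply_eq(1)[OF \<alpha> that] by simp
qed

lemma integral_Phi_n:
  assumes \<alpha>: "loc_integrable \<alpha>" and \<beta>: "loc_integrable \<beta>" and h: "continuous_on {0..t} h"
  shows "integral {0..t} (\<lambda>s. \<beta> s *\<^sub>R Phi_n U \<alpha> t s (h s))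
        = U (primitive \<alpha> t) (integral {0..t} (\<lambda>s. \<beta> s *\<^sub>R U (- primitive \<alpha> s) (h s)))"
proof -
  have "integral {0..t} (\<lambda>s. \<beta> s *\<^sub>R Phi_n U \<alpha> t s (h s))
      = integral {0..t} (\<lambda>s. U (primitive \<alpha> t) (\<beta> s *\<^sub>R U (- primitive \<alpha> s) (h s)))"
    by (rule integral_cong) (simp add: Phi_n_apply_eq(2)[OF \<alpha>] U_scaleR)
  also have "\<dots> = U (primitive \<alpha> t) (integral {0..t} (\<lambda>s. \<beta> s *\<^sub>R U (- primitive \<alpha> s) (h s)))"
    by (intro integral_U integrable_scaleR_continuous loc_integrable_absolutely_integrable[OF \<beta>]
        continuous_on_U_comp continuous_intros continuous_on_primitive[OF \<alpha>] h)
  finally show ?thesis .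
qed

lemma continuous_on_duhamel_n:
  assumes \<alpha>: "loc_integrable \<alpha>" and \<beta>: "loc_integrable \<beta>" and h: "continuous_on {0..T} h"
  shows "continuous_on {0..T} (duhamel_n J U \<alpha> \<beta> u0 h)"
proof -
  let ?I = "\<lambda>t. integral {0..t} (\<lambda>s. \<beta> s *\<^sub>R U (- primitive \<alpha> s) (h s))"
  have "continuous_on {0..T} ?I"
    by (intro continuous_on_indefinite_integral_scaleR loc_integrable_absolutely_integrable[OF \<beta>]
        continuous_on_U_comp continuous_intros continuous_on_primitive[OF \<alpha>] h)
  then have "continuous_on {0..T} (\<lambda>t. U (primitive \<alpha> t) u0 - J (U (primitive \<alpha> t) (?I t)))"
    by (intro continuous_intros continuous_on_U_comp continuous_on_primitive[OF \<alpha>]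
        bounded_linear.continuous_on[OF J_bounded_linear])
  then show ?thesis
  proof (rule continuous_on_eq)
    fix t assume t: "t \<in> {0..T}"
    have "Phi_n U \<alpha> t 0 u0 = U (primitive \<alpha> t) u0"
      using Phi_n_apply_eq(1)[OF \<alpha>, of 0 t] t by (simp add: primitive_def)
    then show "U (primitive \<alpha> t) u0 - J (U (primitive \<alpha> t) (?I t)) = duhamel_n J U \<alpha> \<beta> u0 h t"
      using integral_Phi_n[OF \<alpha> \<beta> continuous_on_subset[OF h]] t by (simp add: duhamel_n_def)
  qed
qed

lemma norm_duhamel_n_diff_le:
  assumes \<alpha>: "loc_integrable \<alpha>" and \<beta>: "loc_integrable \<beta>"
    and h1: "continuous_on {0..t} h1" and h2: "continuous_on {0..t} h2"
  shows "norm (duhamel_n J U \<alpha> \<beta> u0 h1 t - duhamel_n J U \<alpha> \<beta> u0 h2 t)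
       \<le> integral {0..t} (\<lambda>s. \<bar>\<beta> s\<bar> * norm (h1 s - h2 s))"
proof -
  have "norm (duhamel_n J U \<alpha> \<beta> u0 h1 t - duhamel_n J U \<alpha> \<beta> u0 h2 t)
      = norm (integral {0..t} (\<lambda>s. \<beta> s *\<^sub>R Phi_n U \<alpha> t s (h1 s))
              - integral {0..t} (\<lambda>s. \<beta> s *\<^sub>R Phi_n U \<alpha> t s (h2 s)))"
    unfolding duhamel_n_def by (rule norm_J_diff)
  also have "integral {0..t} (\<lambda>s. \<beta> s *\<^sub>R Phi_n U \<alpha> t s (h1 s))
              - integral {0..t} (\<lambda>s. \<beta> s *\<^sub>R Phi_n U \<alpha> t s (h2 s))
      = integral {0..t} (\<lambda>s. \<beta> s *\<^sub>R U (primitive \<alpha> t - primitive \<alpha> s) (h1 s - h2 s))"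
    unfolding integral_diff[OF integrable_Phi_n[OF \<alpha> \<beta> h1] integrable_Phi_n[OF \<alpha> \<beta> h2], symmetric]
    by (rule integral_cong) (simp add: Phi_n_apply_eq(1)[OF \<alpha>] U_diff[symmetric] scaleR_diff_right)
  also have "norm (integral {0..t} (\<lambda>s. \<beta> s *\<^sub>R U (primitive \<alpha> t - primitive \<alpha> s) (h1 s - h2 s)))
      \<le> integral {0..t} (\<lambda>s. \<bar>\<beta> s\<bar> * norm (U (primitive \<alpha> t - primitive \<alpha> s) (h1 s - h2 s)))"
    by (intro norm_integral_scaleR_le loc_integrable_absolutely_integrable[OF \<beta>] continuous_on_U_comp
        continuous_intros continuous_on_primitive[OF \<alpha>] h1 h2)
  finally show ?thesis by (simp add: norm_U)
qed

lemma norm_duhamel_n_diff_le_Lipschitz: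
  assumes \<alpha>: "loc_integrable \<alpha>" and \<beta>: "loc_integrable \<beta>"
    and h: "continuous_on {0..t} h1" "continuous_on {0..t} h2"
    and w: "continuous_on {0..t} w1" "continuous_on {0..t} w2"
    and L: "\<And>s. s \<in> {0..t} \<Longrightarrow> norm (h1 s - h2 s) \<le> L * norm (w1 s - w2 s)"
  shows "norm (duhamel_n J U \<alpha> \<beta> u0 h1 t - duhamel_n J U \<alpha> \<beta> u0 h2 t)
       \<le> integral {0..t} (\<lambda>s. L * \<bar>\<beta> s\<bar> * norm (w1 s - w2 s))"
proof -
  have \<beta>t: "(\<lambda>s. \<bar>\<beta> s\<bar>) absolutely_integrable_on {0..t}" "(\<lambda>s. L * \<bar>\<beta> s\<bar>) absolutely_integrable_on {0..t}"
    by (intro set_integrable_mult_right set_integrable_abs loc_integrable_absolutely_integrable[OF \<beta>])+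
  have "integral {0..t} (\<lambda>s. \<bar>\<beta> s\<bar> * norm (h1 s - h2 s)) \<le> integral {0..t} (\<lambda>s. L * \<bar>\<beta> s\<bar> * norm (w1 s - w2 s))"
  proof (rule integral_le)
    show "(\<lambda>s. \<bar>\<beta> s\<bar> * norm (h1 s - h2 s)) integrable_on {0..t}"
      by (intro integrable_times_continuous[OF \<beta>t(1)] continuous_intros h)
    show "(\<lambda>s. L * \<bar>\<beta> s\<bar> * norm (w1 s - w2 s)) integrable_on {0..t}"
      by (intro integrable_times_continuous[OF \<beta>t(2)] continuous_intros w)
    show "\<bar>\<beta> s\<bar> * norm (h1 s - h2 s) \<le> L * \<bar>\<beta> s\<bar> * norm (w1 s - w2 s)" if "s \<in> {0..t}" for s
      using mult_left_mono[OF L[OF that] abs_ge_zero[of "\<beta> s"]] by (simp add: algebra_simps)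
  qed
  then show ?thesis using norm_duhamel_n_diff_le[OF \<alpha> \<beta> h] by (rule order_trans[rotated])
qed

lemma duhamel_n_fixed_point:
  assumes \<alpha>: "loc_integrable \<alpha>" and \<beta>: "loc_integrable \<beta>" and T: "0 \<le> T"
    and N: "\<And>x y. norm (N x - N y) \<le> L * norm (x - y)" and L: "L \<ge> 0"
  obtains w where "continuous_on {0..T} w" "\<And>t. t \<in> {0..T} \<Longrightarrow> duhamel_n J U \<alpha> \<beta> u0 (\<lambda>s. N (w s)) t = w t"
proof -
  note Nw = continuous_on_Lipschitz_comp[OF N L]
  define k where "k s = L * \<bar>\<beta> s\<bar>" for s
  have k: "k absolutely_integrable_on {0..T}" and k0: "\<And>s. 0 \<le> k s"
    using L unfolding k_def
    by (auto intro!: set_integrable_mult_right set_integrable_abs loc_integrable_absolutely_integrable[OF \<beta>])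
  obtain l where l: "l \<ge> 0" and ker: "\<And>t. t \<in> {0..T} \<Longrightarrow> integral {0..t} (\<lambda>s. k s * exp (l * s)) \<le> 1/2 * exp (l * t)"
    using exponential_weight_for_kernel[OF k k0, of "1/2"] by auto
  show ?thesis
  proof (rule fixed_point_exponential_weight[OF T k k0 l, where \<Gamma> = "\<lambda>w. duhamel_n J U \<alpha> \<beta> u0 (\<lambda>s. N (w s))"])
    show "integral {0..t} (\<lambda>s. k s * exp (l * s)) \<le> exp (l * t) / 2" if "t \<in> {0..T}" for t
      using ker[OF that] by simp
    show "continuous_on {0..T} (duhamel_n J U \<alpha> \<beta> u0 (\<lambda>s. N (w s)))" if "continuous_on {0..T} w" for w
      by (rule continuous_on_duhamel_n[OF \<alpha> \<beta> Nw[OF that]])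
    show "norm (duhamel_n J U \<alpha> \<beta> u0 (\<lambda>s. N (v s)) t - duhamel_n J U \<alpha> \<beta> u0 (\<lambda>s. N (w s)) t)
        \<le> integral {0..t} (\<lambda>s. k s * norm (v s - w s))"
      if "continuous_on {0..T} v" "continuous_on {0..T} w" "t \<in> {0..T}" for v w t
    proof -
      have "continuous_on {0..t} v" "continuous_on {0..t} w"
        using that by (auto elim!: continuous_on_subset)
      then show ?thesis using norm_duhamel_n_diff_le_Lipschitz[OF \<alpha> \<beta> Nw Nw _ _ N] by (simp add: k_def)
    qed
  qed (rule that)
qed

lemma mild_sol_n_unique:
  assumes \<alpha>: "loc_integrable \<alpha>" and \<beta>: "loc_integrable \<beta>" and B: "loc_lipschitz B"
    and v: "mild_sol_n J U \<alpha> \<beta> B u0 T v" and w: "mild_sol_n J U \<alpha> \<beta> B u0 T w" and t: "t \<in> {0..T}"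
  shows "v t = w t"
proof -
  have vc: "continuous_on {0..T} v" and wc: "continuous_on {0..T} w"
    and eq: "\<And>t. t \<in> {0..T} \<Longrightarrow> v t - w t
      = duhamel_n J U \<alpha> \<beta> u0 (\<lambda>s. B (v s)) t - duhamel_n J U \<alpha> \<beta> u0 (\<lambda>s. B (w s)) t"
    using v w by (auto simp: mild_sol_n_duhamel_n)
  obtain R where R: "\<And>s. s \<in> {0..T} \<Longrightarrow> norm (v s) \<le> R \<and> norm (w s) \<le> R"
    using continuous_on_compact_bound[OF compact_Icc vc] continuous_on_compact_bound[OF compact_Icc wc]
    by (metis max.cobounded1 max.cobounded2 order_trans)
  obtain L where L: "L-lipschitz_on (cball 0 R) B" using B unfolding loc_lipschitz_def by blast
  have Bc: "continuous_on {0..t'} (\<lambda>s. B (f s))"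
    if "continuous_on {0..T} f" "\<And>s. s \<in> {0..T} \<Longrightarrow> norm (f s) \<le> R" "t' \<le> T" for f t'
    using that by (intro continuous_on_compose2[OF lipschitz_on_continuous_on[OF L]]
        continuous_on_subset[OF that(1)]) auto
  define k where "k s = L * \<bar>\<beta> s\<bar>" for s
  have k: "k absolutely_integrable_on {0..T}" and k0: "\<And>s. 0 \<le> k s"
    using lipschitz_on_nonneg[OF L] unfolding k_def
    by (auto intro!: set_integrable_mult_right set_integrable_abs loc_integrable_absolutely_integrable[OF \<beta>])
  obtain l where l: "l \<ge> 0" and ker: "\<And>t. t \<in> {0..T} \<Longrightarrow> integral {0..t} (\<lambda>s. k s * exp (l * s)) \<le> 1/2 * exp (l * t)"
    using exponential_weight_for_kernel[OF k k0, of "1/2"] by auto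
  have "norm (v t - w t) \<le> 2 * 0 * exp (l * T)"
  proof (rule gronwall_exponential_weight[OF _ k _ _ _ _ l _ _ t])
    show "norm (v t' - w t') \<le> 0 + integral {0..t'} (\<lambda>s. k s * norm (v s - w s))" if t': "t' \<in> {0..T}" for t'
    proof -
      have sub: "{0..t'} \<subseteq> {0..T}" using t' by auto
      have "norm (B (v s) - B (w s)) \<le> L * norm (v s - w s)" if "s \<in> {0..t'}" for s
        using lipschitz_onD[OF L, of "v s" "w s"] R[of s] that sub by (auto simp: dist_norm)
      then show ?thesis unfolding eq[OF t'] k_def
        using norm_duhamel_n_diff_le_Lipschitz[OF \<alpha> \<beta> Bc[OF vc] Bc[OF wc]
            continuous_on_subset[OF vc sub] continuous_on_subset[OF wc sub]] R t' by auto
    qed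
  qed (use t ker k0 in \<open>auto intro!: continuous_intros vc wc\<close>)
  then show ?thesis by simp
qed

lemma duhamel_difference_le:
  assumes \<alpha>: "loc_integrable \<alpha>" and \<beta>: "loc_integrable \<beta>" and t: "0 \<le> t"
    and f: "continuous_on {0..t} f" and h: "continuous_on {0..t} h"
  shows "norm ((U t u0 - J (integral {0..t} (\<lambda>s. U (t - s) (f s)))) - duhamel_n J U \<alpha> \<beta> u0 h t)
     \<le> norm (u0 - U (primitive \<alpha> t - t) u0) + norm (integral {0..t} (\<lambda>s. (1 - \<beta> s) *\<^sub>R U (- s) (f s)))
       + integral {0..t} (\<lambda>s. \<bar>\<beta> s\<bar> * norm (f s - U ((primitive \<alpha> t - primitive \<alpha> s) - (t - s)) (f s)))
       + integral {0..t} (\<lambda>s. \<bar>\<beta> s\<bar> * norm (f s - h s))"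
proof -
  let ?F = "primitive \<alpha>"
  have Fc: "continuous_on {0..t} ?F" by (rule continuous_on_primitive[OF \<alpha>])
  have \<beta>i: "\<beta> absolutely_integrable_on {0..t}" "(\<lambda>s. 1 - \<beta> s) absolutely_integrable_on {0..t}"
    using loc_integrable_absolutely_integrable[OF \<beta>]
    by (auto intro!: set_integral_diff(1) absolutely_integrable_continuous_real)
  define X Y V where "X s = U (t - s) (f s)" and "Y s = U (?F t - ?F s) (f s)"
    and "V s = U (?F t - ?F s) (f s - h s)" for s
  have c: "continuous_on {0..t} X" "continuous_on {0..t} Y" "continuous_on {0..t} V"
    unfolding X_def Y_def V_def by (intro continuous_on_U_comp continuous_intros f h Fc)+
  define I1 I2 I3 where "I1 = integral {0..t} (\<lambda>s. (1 - \<beta> s) *\<^sub>R X s)"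
    and "I2 = integral {0..t} (\<lambda>s. \<beta> s *\<^sub>R (X s - Y s))" and "I3 = integral {0..t} (\<lambda>s. \<beta> s *\<^sub>R V s)"
  have "integral {0..t} X - integral {0..t} (\<lambda>s. \<beta> s *\<^sub>R Phi_n U \<alpha> t s (h s)) = I1 + I2 + I3"
  proof -
    have Phi: "integral {0..t} (\<lambda>s. \<beta> s *\<^sub>R Phi_n U \<alpha> t s (h s)) = integral {0..t} (\<lambda>s. \<beta> s *\<^sub>R (Y s - V s))"
      by (rule integral_cong) (simp add: Phi_n_apply_eq(1)[OF \<alpha>] Y_def V_def U_diff)
    have i: "(\<lambda>s. (1 - \<beta> s) *\<^sub>R X s) integrable_on {0..t}" "(\<lambda>s. \<beta> s *\<^sub>R V s) integrable_on {0..t}"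
      "(\<lambda>s. \<beta> s *\<^sub>R (X s - Y s)) integrable_on {0..t}" "(\<lambda>s. \<beta> s *\<^sub>R (Y s - V s)) integrable_on {0..t}"
      by (intro integrable_scaleR_continuous \<beta>i continuous_on_diff c)+
    have "(\<lambda>s. X s - \<beta> s *\<^sub>R (Y s - V s))
        = (\<lambda>s. ((1 - \<beta> s) *\<^sub>R X s + \<beta> s *\<^sub>R (X s - Y s)) + \<beta> s *\<^sub>R V s)"
      by (simp add: algebra_simps fun_eq_iff)
    then have "integral {0..t} (\<lambda>s. X s - \<beta> s *\<^sub>R (Y s - V s)) = I1 + I2 + I3"
      unfolding I1_def I2_def I3_def using i by (simp add: integral_add integrable_add)
    moreover have "X integrable_on {0..t}"
      using integrable_scaleR_continuous[OF absolutely_integrable_continuous_real c(1), of "\<lambda>_. 1"] by simp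
    ultimately show ?thesis
      using Phi integral_diff[OF _ i(4)] by simp
  qed
  then have "J (integral {0..t} X) - J (integral {0..t} (\<lambda>s. \<beta> s *\<^sub>R Phi_n U \<alpha> t s (h s))) = J (I1 + I2 + I3)"
    by (simp add: linear_diff[OF bounded_linear.linear[OF J_bounded_linear], symmetric])
  moreover have "Phi_n U \<alpha> t 0 u0 = U (?F t) u0"
    using Phi_n_apply_eq(1)[OF \<alpha>, of 0 t] t by (simp add: primitive_def)
  ultimately have "norm ((U t u0 - J (integral {0..t} X)) - duhamel_n J U \<alpha> \<beta> u0 h t)
      = norm ((U t u0 - U (?F t) u0) - J (I1 + I2 + I3))"
    unfolding duhamel_n_def by (metis (no_types, lifting) diff_diff_eq2 diff_diff_add add_diff_cancel_left')
  also have "\<dots> \<le> norm (U t u0 - U (?F t) u0) + norm I1 + norm I2 + norm I3"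
    using norm_triangle_ineq4[of "U t u0 - U (?F t) u0" "J (I1 + I2 + I3)"]
      norm_triangle_le[OF order_refl, of "I1 + I2" I3] norm_triangle_ineq[of I1 I2] by (simp add: norm_J)
  also have "norm (U t u0 - U (?F t) u0) = norm (u0 - U (?F t - t) u0)"
    by (rule norm_U_diff_U)
  also have "norm I1 = norm (integral {0..t} (\<lambda>s. (1 - \<beta> s) *\<^sub>R U (- s) (f s)))"
    using integral_U[OF integrable_scaleR_continuous[OF \<beta>i(2)], of "\<lambda>s. U (- s) (f s)" t]
    by (simp add: I1_def X_def U_scaleR U_U norm_U continuous_on_U_comp continuous_intros f)
  also have "norm I2 \<le> integral {0..t} (\<lambda>s. \<bar>\<beta> s\<bar> * norm (f s - U ((?F t - ?F s) - (t - s)) (f s)))"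
    using norm_integral_scaleR_le[OF \<beta>i(1) continuous_on_diff[OF c(1,2)]]
    by (simp add: I2_def X_def Y_def norm_U_diff_U)
  also have "norm I3 \<le> integral {0..t} (\<lambda>s. \<bar>\<beta> s\<bar> * norm (f s - h s))"
    using norm_integral_scaleR_le[OF \<beta>i(1) c(3)] by (simp add: I3_def V_def norm_U)
  finally show ?thesis by (simp add: X_def)
qed

lemma eventually_phase_error_small:
  assumes \<alpha>: "dominated_weak_conv_one \<alpha> \<alpha>b" and e: "e > 0"
  shows "\<forall>\<^sub>F n in sequentially. \<forall>t\<in>{0..T}. norm (u0 - U (primitive (\<alpha> n) t - t) u0) < e"
proof -
  obtain \<rho> where \<rho>: "\<rho> > 0" and close: "\<And>r s. \<bar>r\<bar> < \<rho> \<Longrightarrow> s \<in> {0..1::real} \<Longrightarrow> norm (U r u0 - u0) < e"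
    using U_uniformly_close[OF continuous_on_const[of "{0..1::real}" u0] e] by blast
  have "\<forall>\<^sub>F n in sequentially. \<forall>t\<in>{0..T}. dist (primitive (\<alpha> n) t) t < \<rho>"
    using dominated_weak_conv_one_primitive[OF \<alpha>, of T, unfolded uniform_limit_iff] \<rho> by blast
  then show ?thesis
  proof eventually_elim
    case (elim n)
    show ?case
    proof
      fix t assume "t \<in> {0..T}"
      then have "\<bar>primitive (\<alpha> n) t - t\<bar> < \<rho>" using elim by (simp add: dist_real_def)
      then show "norm (u0 - U (primitive (\<alpha> n) t - t) u0) < e"
        using close[of _ 0] by (simp add: norm_minus_commute)
    qed
  qed
qed

lemma eventually_drift_error_small:
  assumes \<alpha>: "dominated_weak_conv_one \<alpha> \<alpha>b" and \<beta>: "dominated_weak_conv_one \<beta> \<beta>b"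
    and f: "continuous_on {0..T} f" and e: "e > 0"
  shows "\<forall>\<^sub>F n in sequentially. \<forall>t\<in>{0..T}.
    integral {0..t} (\<lambda>s. \<bar>\<beta> n s\<bar> * norm (f s - U ((primitive (\<alpha> n) t - primitive (\<alpha> n) s) - (t - s)) (f s))) \<le> e"
proof -
  obtain K where K: "K \<ge> 0" and \<beta>K: "\<And>n t. t \<in> {0..T} \<Longrightarrow> integral {0..t} (\<lambda>s. \<bar>\<beta> n s\<bar>) \<le> K"
    using dominated_weak_conv_one_L1_bound[OF \<beta>] by blast
  obtain \<rho> where \<rho>: "\<rho> > 0"
    and close: "\<And>r s. \<bar>r\<bar> < \<rho> \<Longrightarrow> s \<in> {0..T} \<Longrightarrow> norm (U r (f s) - f s) < e / (K + 1)"
    using U_uniformly_close[OF f, of "e / (K + 1)"] e K by (metis add_nonneg_pos divide_pos_pos zero_less_one)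
  have "\<forall>\<^sub>F n in sequentially. \<forall>t\<in>{0..T}. dist (primitive (\<alpha> n) t) t < \<rho> / 2"
    using dominated_weak_conv_one_primitive[OF \<alpha>, of T, unfolded uniform_limit_iff] \<rho> half_gt_zero by blast
  then show ?thesis
  proof eventually_elim
    case (elim n)
    show ?case
    proof
      fix t assume t: "t \<in> {0..T}"
      have \<beta>n: "(\<lambda>s. \<bar>\<beta> n s\<bar>) absolutely_integrable_on {0..t}"
        using \<beta> unfolding dominated_weak_conv_one_def
        by (blast intro: set_integrable_abs[OF loc_integrable_absolutely_integrable])
      have \<alpha>n: "loc_integrable (\<alpha> n)" using \<alpha> by (simp add: dominated_weak_conv_one_def)
      have "integral {0..t} (\<lambda>s. \<bar>\<beta> n s\<bar> * norm (f s - U ((primitive (\<alpha> n) t - primitive (\<alpha> n) s) - (t - s)) (f s)))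
          \<le> integral {0..t} (\<lambda>s. \<bar>\<beta> n s\<bar> * (e / (K + 1)))"
      proof (rule integral_le)
        show "(\<lambda>s. \<bar>\<beta> n s\<bar> * norm (f s - U ((primitive (\<alpha> n) t - primitive (\<alpha> n) s) - (t - s)) (f s)))
            integrable_on {0..t}"
          using t by (intro integrable_times_continuous[OF \<beta>n] continuous_intros continuous_on_U_comp
              continuous_on_primitive[OF \<alpha>n] continuous_on_subset[OF f]) auto
        show "(\<lambda>s. \<bar>\<beta> n s\<bar> * (e / (K + 1))) integrable_on {0..t}"
          by (intro integrable_times_continuous[OF \<beta>n] continuous_intros)
        fix s assume s: "s \<in> {0..t}"
        have "dist (primitive (\<alpha> n) t) t < \<rho> / 2" "dist (primitive (\<alpha> n) s) s < \<rho> / 2"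
          using elim t s by auto
        then have "\<bar>(primitive (\<alpha> n) t - primitive (\<alpha> n) s) - (t - s)\<bar> < \<rho>"
          unfolding dist_real_def by linarith
        moreover have "s \<in> {0..T}" using s t by auto
        ultimately have "norm (f s - U ((primitive (\<alpha> n) t - primitive (\<alpha> n) s) - (t - s)) (f s)) \<le> e / (K + 1)"
          using close by (metis less_imp_le norm_minus_commute)
        then show "\<bar>\<beta> n s\<bar> * norm (f s - U ((primitive (\<alpha> n) t - primitive (\<alpha> n) s) - (t - s)) (f s))
            \<le> \<bar>\<beta> n s\<bar> * (e / (K + 1))"
          by (rule mult_left_mono) simp
      qed
      also have "\<dots> = integral {0..t} (\<lambda>s. \<bar>\<beta> n s\<bar>) * (e / (K + 1))" by simp
      also have "\<dots> \<le> K * (e / (K + 1))" using \<beta>K[OF t] e K by (intro mult_right_mono) auto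
      also have "\<dots> \<le> e" using e K by (simp add: field_simps)
      finally show "integral {0..t} (\<lambda>s. \<bar>\<beta> n s\<bar> * norm (f s - U ((primitive (\<alpha> n) t - primitive (\<alpha> n) s) - (t - s)) (f s))) \<le> e" .
    qed
  qed
qed

lemma duhamel_error_le:
  fixes u w :: "real \<Rightarrow> 'a"
  assumes \<alpha>: "loc_integrable \<alpha>" and \<beta>: "loc_integrable \<beta>" and t: "0 \<le> t"
    and N: "\<And>x y. norm (N x - N y) \<le> L * norm (x - y)" and L: "L \<ge> 0"
    and u: "continuous_on {0..t} u" and w: "continuous_on {0..t} w"
  shows "norm ((U t u0 - J (integral {0..t} (\<lambda>s. U (t - s) (N (u s))))) - duhamel_n J U \<alpha> \<beta> u0 (\<lambda>s. N (w s)) t)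
     \<le> norm (u0 - U (primitive \<alpha> t - t) u0)
       + dist (integral {0..t} (\<lambda>s. \<beta> s *\<^sub>R U (- s) (N (u s)))) (integral {0..t} (\<lambda>s. U (- s) (N (u s))))
       + integral {0..t} (\<lambda>s. \<bar>\<beta> s\<bar> * norm (N (u s) - U ((primitive \<alpha> t - primitive \<alpha> s) - (t - s)) (N (u s))))
       + integral {0..t} (\<lambda>s. L * \<bar>\<beta> s\<bar> * norm (u s - w s))"
proof -
  have \<beta>t: "\<beta> absolutely_integrable_on {0..t}" by (rule loc_integrable_absolutely_integrable[OF \<beta>])
  have f: "continuous_on {0..t} (\<lambda>s. N (u s))" "continuous_on {0..t} (\<lambda>s. N (w s))"
    by (intro continuous_on_Lipschitz_comp[OF N L] u w)+
  have g: "continuous_on {0..t} (\<lambda>s. U (- s) (N (u s)))" by (intro continuous_on_U_comp continuous_intros f)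
  have "norm (integral {0..t} (\<lambda>s. (1 - \<beta> s) *\<^sub>R U (- s) (N (u s))))
      = dist (integral {0..t} (\<lambda>s. \<beta> s *\<^sub>R U (- s) (N (u s)))) (integral {0..t} (\<lambda>s. U (- s) (N (u s))))"
    using integral_diff[OF integrable_scaleR_continuous[OF absolutely_integrable_continuous_real g]
        integrable_scaleR_continuous[OF \<beta>t g], of "\<lambda>_. 1"]
    by (simp add: dist_norm norm_minus_commute scaleR_diff_left)
  moreover have "integral {0..t} (\<lambda>s. \<bar>\<beta> s\<bar> * norm (N (u s) - N (w s)))
      \<le> integral {0..t} (\<lambda>s. L * \<bar>\<beta> s\<bar> * norm (u s - w s))"
  proof (rule integral_le)
    show "(\<lambda>s. \<bar>\<beta> s\<bar> * norm (N (u s) - N (w s))) integrable_on {0..t}"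
      by (intro integrable_times_continuous set_integrable_abs \<beta>t continuous_intros f)
    show "(\<lambda>s. L * \<bar>\<beta> s\<bar> * norm (u s - w s)) integrable_on {0..t}"
      by (intro integrable_times_continuous set_integrable_mult_right set_integrable_abs \<beta>t continuous_intros u w)
    show "\<bar>\<beta> s\<bar> * norm (N (u s) - N (w s)) \<le> L * \<bar>\<beta> s\<bar> * norm (u s - w s)" for s
      using mult_left_mono[OF N[of "u s" "w s"] abs_ge_zero[of "\<beta> s"]] by (simp add: algebra_simps)
  qed
  ultimately show ?thesis using duhamel_difference_le[OF \<alpha> \<beta> t f, of u0] by linarith
qed

lemma truncated_solutions_converge:
  assumes \<alpha>: "dominated_weak_conv_one \<alpha> \<alpha>b" and \<beta>: "dominated_weak_conv_one \<beta> \<beta>b"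
    and N: "\<And>x y. norm (N x - N y) \<le> L * norm (x - y)" and L: "L \<ge> 0"
    and u: "continuous_on {0..T} u"
    and u_eq: "\<And>t. t \<in> {0..T} \<Longrightarrow> u t = U t u0 - J (integral {0..t} (\<lambda>s. U (t - s) (N (u s))))"
    and W: "\<And>n. continuous_on {0..T} (W n)"
    and W_eq: "\<And>n t. t \<in> {0..T} \<Longrightarrow> W n t = duhamel_n J U (\<alpha> n) (\<beta> n) u0 (\<lambda>s. N (W n s)) t"
  shows "uniform_limit {0..T} W u sequentially"
  unfolding uniform_limit_iff
proof (intro allI impI)
  fix \<epsilon> :: real assume \<epsilon>: "\<epsilon> > 0"
  have f: "continuous_on {0..T} (\<lambda>s. N (u s))" by (rule continuous_on_Lipschitz_comp[OF N L u])
  have g: "continuous_on {0..T} (\<lambda>s. U (- s) (N (u s)))" by (intro continuous_on_U_comp continuous_intros f)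
  obtain l where l: "l \<ge> 0"
    and ker: "\<And>n t. t \<in> {0..T} \<Longrightarrow> integral {0..t} (\<lambda>s. L * \<bar>\<beta> n s\<bar> * exp (l * s)) \<le> exp (l * t) / 2"
    using dominated_weak_conv_one_kernel[OF \<beta> L] by blast
  define \<eta> where "\<eta> = \<epsilon> / (8 * exp (l * T))"
  have \<eta>: "\<eta> > 0" using \<epsilon> by (simp add: \<eta>_def)
  have "\<forall>\<^sub>F n in sequentially. \<forall>t\<in>{0..T}. dist (integral {0..t} (\<lambda>s. \<beta> n s *\<^sub>R U (- s) (N (u s))))
      (integral {0..t} (\<lambda>s. U (- s) (N (u s)))) < \<eta>"
    using dominated_weak_conv_one_uniform_limit[OF \<beta> g] \<eta> by (simp add: uniform_limit_iff)
  with eventually_phase_error_small[OF \<alpha> \<eta>, of T u0] eventually_drift_error_small[OF \<alpha> \<beta> f \<eta>]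
  show "\<forall>\<^sub>F n in sequentially. \<forall>t\<in>{0..T}. dist (W n t) (u t) < \<epsilon>"
  proof eventually_elim
    case (elim n)
    have \<alpha>n: "loc_integrable (\<alpha> n)" and \<beta>n: "loc_integrable (\<beta> n)"
      using \<alpha> \<beta> by (simp_all add: dominated_weak_conv_one_def)
    have k: "(\<lambda>s. L * \<bar>\<beta> n s\<bar>) absolutely_integrable_on {0..T}"
      by (intro set_integrable_mult_right set_integrable_abs loc_integrable_absolutely_integrable[OF \<beta>n])
    define e where "e t = norm (u t - W n t)" for t
    have e: "continuous_on {0..T} e" unfolding e_def by (intro continuous_intros u W)
    have "e t \<le> 3 * \<eta> + integral {0..t} (\<lambda>s. L * \<bar>\<beta> n s\<bar> * e s)" if t: "t \<in> {0..T}" for t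
    proof -
      have sub: "{0..t} \<subseteq> {0..T}" using t by auto
      have "u t - W n t = (U t u0 - J (integral {0..t} (\<lambda>s. U (t - s) (N (u s)))))
          - duhamel_n J U (\<alpha> n) (\<beta> n) u0 (\<lambda>s. N (W n s)) t"
        using u_eq[OF t] W_eq[OF t] by simp
      then have "e t \<le> norm (u0 - U (primitive (\<alpha> n) t - t) u0)
          + dist (integral {0..t} (\<lambda>s. \<beta> n s *\<^sub>R U (- s) (N (u s)))) (integral {0..t} (\<lambda>s. U (- s) (N (u s))))
          + integral {0..t} (\<lambda>s. \<bar>\<beta> n s\<bar> * norm (N (u s)
              - U ((primitive (\<alpha> n) t - primitive (\<alpha> n) s) - (t - s)) (N (u s))))
          + integral {0..t} (\<lambda>s. L * \<bar>\<beta> n s\<bar> * e s)"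
        unfolding e_def using duhamel_error_le[OF \<alpha>n \<beta>n _ N L continuous_on_subset[OF u sub]
            continuous_on_subset[OF W sub], of u0] t by (simp only: atLeastAtMost_iff)
      moreover have "norm (u0 - U (primitive (\<alpha> n) t - t) u0) < \<eta>"
        "dist (integral {0..t} (\<lambda>s. \<beta> n s *\<^sub>R U (- s) (N (u s)))) (integral {0..t} (\<lambda>s. U (- s) (N (u s)))) < \<eta>"
        "integral {0..t} (\<lambda>s. \<bar>\<beta> n s\<bar> * norm (N (u s)
            - U ((primitive (\<alpha> n) t - primitive (\<alpha> n) s) - (t - s)) (N (u s)))) \<le> \<eta>"
        using elim t by blast+
      ultimately show ?thesis by linarith
    qed
    then have "e t \<le> 2 * (3 * \<eta>) * exp (l * T)" if "t \<in> {0..T}" for t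
      using that \<eta> ker L l by (intro gronwall_exponential_weight[OF _ k _ e]) (auto simp: e_def)
    moreover have "2 * (3 * \<eta>) * exp (l * T) < \<epsilon>" using \<epsilon> by (simp add: \<eta>_def)
    ultimately show ?case by (force simp: e_def dist_norm norm_minus_commute)
  qed
qed

lemma mild_sol_n_if_truncated:
  assumes \<alpha>: "loc_integrable \<alpha>" and \<beta>: "loc_integrable \<beta>" and L: "L-lipschitz_on (cball 0 R) B"
    and W: "continuous_on {0..T} w" and bound: "\<And>t. t \<in> {0..T} \<Longrightarrow> norm (w t) \<le> R"
    and eq: "\<And>t. t \<in> {0..T} \<Longrightarrow> duhamel_n J U \<alpha> \<beta> u0 (\<lambda>s. B (trunc R (w s))) t = w t"
  shows "mild_sol_n J U \<alpha> \<beta> B u0 T w"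
  unfolding mild_sol_n_duhamel_n
proof (intro conjI ballI W)
  fix t assume t: "t \<in> {0..T}"
  have Bw: "continuous_on {0..t} (\<lambda>s. B (w s))"
    using t bound by (intro continuous_on_compose2[OF lipschitz_on_continuous_on[OF L] continuous_on_subset[OF W]]) auto
  show "(\<lambda>s. \<beta> s *\<^sub>R Phi_n U \<alpha> t s (B (w s))) integrable_on {0..t}" by (rule integrable_Phi_n[OF \<alpha> \<beta> Bw])
  have "duhamel_n J U \<alpha> \<beta> u0 (\<lambda>s. B (trunc R (w s))) t = duhamel_n J U \<alpha> \<beta> u0 (\<lambda>s. B (w s)) t"
    unfolding duhamel_n_def using t bound by (intro arg_cong2[where f = "(-)"] arg_cong[where f = J] integral_cong)
      (auto simp: trunc_eq_self)
  then show "w t = duhamel_n J U \<alpha> \<beta> u0 (\<lambda>s. B (w s)) t" using eq[OF t] by simp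
qed

text \<open>Replacing \<open>B\<close> by \<open>B \<circ> trunc R\<close> with \<open>R\<close> above the size of \<open>u\<close> makes the nonlinearity globally
  Lipschitz, so the approximate solutions exist on all of \<open>[0,T]\<close>; once they are uniformly close
  to \<open>u\<close> they stay below \<open>R\<close> and the truncation is inactive.\<close>

lemma approximate_mild_solutions_converge:
  assumes \<alpha>: "dominated_weak_conv_one \<alpha> \<alpha>b" and \<beta>: "dominated_weak_conv_one \<beta> \<beta>b"
    and B: "loc_lipschitz B" and T: "0 \<le> T" and u: "mild_sol J U B u0 T u"
  obtains W n0 where "\<And>n. n \<ge> n0 \<Longrightarrow> mild_sol_n J U (\<alpha> n) (\<beta> n) B u0 T (W n)"
    "uniform_limit {0..T} W u sequentially"
proof -
  have \<alpha>n: "loc_integrable (\<alpha> n)" and \<beta>n: "loc_integrable (\<beta> n)" for n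
    using \<alpha> \<beta> by (simp_all add: dominated_weak_conv_one_def)
  have uc: "continuous_on {0..T} u"
    and u_eq: "\<And>t. t \<in> {0..T} \<Longrightarrow> u t = U t u0 - J (integral {0..t} (\<lambda>s. U (t - s) (B (u s))))"
    using u by (auto simp: mild_sol_def)
  obtain M where M: "M \<ge> 0" "\<And>t. t \<in> {0..T} \<Longrightarrow> norm (u t) \<le> M"
    using continuous_on_compact_bound[OF compact_Icc uc] by blast
  define R where "R = M + 1"
  obtain L where L: "L-lipschitz_on (cball 0 R) B" using B unfolding loc_lipschitz_def by blast
  define N where "N x = B (trunc R x)" for x
  have R: "R \<ge> 0" using M by (simp add: R_def)
  have N: "norm (N x - N y) \<le> (2 * L) * norm (x - y)" for x y
    unfolding N_def by (rule norm_comp_trunc_diff_le[OF L R])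
  have L2: "2 * L \<ge> 0" using lipschitz_on_nonneg[OF L] by simp
  have u_eqN: "u t = U t u0 - J (integral {0..t} (\<lambda>s. U (t - s) (N (u s))))" if "t \<in> {0..T}" for t
  proof -
    have "integral {0..t} (\<lambda>s. U (t - s) (B (u s))) = integral {0..t} (\<lambda>s. U (t - s) (N (u s)))"
    proof (rule integral_cong)
      fix s assume "s \<in> {0..t}"
      then have "norm (u s) \<le> R" using M(2)[of s] that by (simp add: R_def)
      then show "U (t - s) (B (u s)) = U (t - s) (N (u s))" by (simp add: N_def trunc_eq_self)
    qed
    then show ?thesis using u_eq[OF that] by simp
  qed
  have "\<forall>n. \<exists>w. continuous_on {0..T} w \<and> (\<forall>t\<in>{0..T}. duhamel_n J U (\<alpha> n) (\<beta> n) u0 (\<lambda>s. N (w s)) t = w t)"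
  proof
    fix n
    obtain w where "continuous_on {0..T} w" "\<And>t. t \<in> {0..T} \<Longrightarrow> duhamel_n J U (\<alpha> n) (\<beta> n) u0 (\<lambda>s. N (w s)) t = w t"
      by (rule duhamel_n_fixed_point[OF \<alpha>n \<beta>n T N L2], rule that)
    then show "\<exists>w. continuous_on {0..T} w \<and> (\<forall>t\<in>{0..T}. duhamel_n J U (\<alpha> n) (\<beta> n) u0 (\<lambda>s. N (w s)) t = w t)"
      by blast
  qed
  then obtain W where W: "\<And>n. continuous_on {0..T} (W n)"
    and W_eq: "\<And>n t. t \<in> {0..T} \<Longrightarrow> duhamel_n J U (\<alpha> n) (\<beta> n) u0 (\<lambda>s. N (W n s)) t = W n t"
    by (metis choice)
  have lim: "uniform_limit {0..T} W u sequentially"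
    using W_eq by (intro truncated_solutions_converge[OF \<alpha> \<beta> N L2 uc u_eqN W]) auto
  then have "\<forall>\<^sub>F n in sequentially. \<forall>t\<in>{0..T}. dist (W n t) (u t) < 1"
    unfolding uniform_limit_iff by simp
  then obtain n0 where n0: "\<And>n t. n \<ge> n0 \<Longrightarrow> t \<in> {0..T} \<Longrightarrow> dist (W n t) (u t) < 1"
    unfolding eventually_sequentially by blast
  show ?thesis
  proof (rule that[OF mild_sol_n_if_truncated[OF \<alpha>n \<beta>n L W] lim])
    fix n t assume "n0 \<le> n" "t \<in> {0..T}"
    moreover have "norm (W n t) \<le> norm (u t) + dist (W n t) (u t)"
      using norm_triangle_ineq2[of "W n t" "u t"] by (simp add: dist_norm)
    ultimately show "norm (W n t) \<le> R" using n0 M(2) by (fastforce simp: R_def)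
  next
    show "duhamel_n J U (\<alpha> n) (\<beta> n) u0 (\<lambda>s. B (trunc R (W n s))) t = W n t" if "t \<in> {0..T}" for n t
      using W_eq[OF that] by (simp add: N_def)
  qed
qed

end

lemma isometric_evolution_if_unitary_group:
  assumes "complex_structure J" and "unitary_group_generated J D A U"
  shows "isometric_evolution J U"
  using assms complex_structure_isometry[OF assms(1)]
  by (intro isometric_evolution.intro) (auto simp: unitary_group_generated_def)

theorem theorem3p1:
  fixes J :: "'a::{real_inner, complete_space} \<Rightarrow> 'a"
    and D :: "'a set" and A :: "'a \<Rightarrow> 'a" and U :: "real \<Rightarrow> 'a \<Rightarrow> 'a"
    and B :: "'a \<Rightarrow> 'a"
    and \<alpha> \<beta> :: "nat \<Rightarrow> real \<Rightarrow> real" and \<alpha>bar \<beta>bar :: "real \<Rightarrow> real"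
    and u0 :: 'a and T :: real and u :: "real \<Rightarrow> 'a"
  assumes "complex_structure J"
    and "self_adjoint_op J D A"
    and "unitary_group_generated J D A U"
    and "loc_lipschitz B" and "B 0 = 0"
    and "\<And>n. loc_integrable (\<alpha> n)" and "\<And>n. loc_integrable (\<beta> n)"
    and "weak_conv_one \<alpha>" and "weak_conv_one \<beta>"
    and "loc_integrable \<alpha>bar" and "loc_integrable \<beta>bar"
    and "\<And>n. AE s in lborel. \<bar>\<alpha> n s\<bar> \<le> \<alpha>bar s"
    and "\<And>n. AE s in lborel. \<bar>\<beta> n s\<bar> \<le> \<beta>bar s"
    and "0 < T"
    and "mild_sol J U B u0 T u"
  shows "\<exists>n0. (\<forall>n\<ge>n0. \<exists>w. mild_sol_n J U (\<alpha> n) (\<beta> n) B u0 T w)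
           \<and> (\<forall>un :: nat \<Rightarrow> real \<Rightarrow> 'a. (\<forall>n\<ge>n0. mild_sol_n J U (\<alpha> n) (\<beta> n) B u0 T (un n)) \<longrightarrow>
                (\<lambda>n. SUP t\<in>{0..T}. norm (u t - un n t)) \<longlonglongrightarrow> 0)"
proof -
  interpret isometric_evolution J U
    by (rule isometric_evolution_if_unitary_group[OF assms(1,3)])
  have \<alpha>: "dominated_weak_conv_one \<alpha> \<alpha>bar" and \<beta>: "dominated_weak_conv_one \<beta> \<beta>bar"
    unfolding dominated_weak_conv_one_def using assms(6-13) by blast+
  obtain W n0 where W: "\<And>n. n \<ge> n0 \<Longrightarrow> mild_sol_n J U (\<alpha> n) (\<beta> n) B u0 T (W n)"
    and lim: "uniform_limit {0..T} W u sequentially"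
    by (rule approximate_mild_solutions_converge[OF \<alpha> \<beta> assms(4) less_imp_le[OF assms(14)] assms(15)],
        rule that)
  show ?thesis
  proof (intro exI[of _ n0] conjI allI impI)
    show "\<exists>w. mild_sol_n J U (\<alpha> n) (\<beta> n) B u0 T w" if "n \<ge> n0" for n using W[OF that] by blast
    fix un :: "nat \<Rightarrow> real \<Rightarrow> 'a"
    assume un: "\<forall>n\<ge>n0. mild_sol_n J U (\<alpha> n) (\<beta> n) B u0 T (un n)"
    have eq: "\<forall>\<^sub>F n in sequentially. (SUP t\<in>{0..T}. norm (u t - W n t)) = (SUP t\<in>{0..T}. norm (u t - un n t))"
      using eventually_ge_at_top[of n0]
    proof eventually_elim
      case (elim n)
      have "mild_sol_n J U (\<alpha> n) (\<beta> n) B u0 T (un n)" using un elim by blast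
      then have "W n t = un n t" if "t \<in> {0..T}" for t
        by (rule mild_sol_n_unique[OF assms(6) assms(7) assms(4) W[OF elim] _ that])
      then show ?case by (intro SUP_cong) auto
    qed
    have "{0..T} \<noteq> {}" using assms(14) by simp
    then show "(\<lambda>n. SUP t\<in>{0..T}. norm (u t - un n t)) \<longlonglongrightarrow> 0"
      using Lim_transform_eventually[OF tendsto_SUP_norm_diff_uniform_limit[OF lim] eq] by blast
  qed
qed

end
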